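(* Let $m$ be a prime, let $F$ be a field containing a primitive $m$th root of unity, and let $K/F$ be a cyclic Galois extension of degree $m$. Then $K$ has a nonassociative cyclic extension of degree $m$.
   Context: Definition: if $A$ is a nonassociative division algebra (an algebra $A\neq 0$ in which left and right multiplication by every nonzero element are bijective) and $D\subseteq A$ an associative division subalgebra, $A$ is a nonassociative cyclic extension of $D$ of degree $m$ if $A$ is a free left $D$-module of rank $m$ and $\mathrm{Aut}(A)$ has a cyclic subgroup $G$ of order $m$ such that $H|_D=\mathrm{id}_D$ for all $H\in G$. *)

theory Defs
  imports "HOL-Algebra.Algebra"
begin

definition primitive_root_of_unity :: "('a, 'm) ring_scheme \<Rightarrow> nat \<Rightarrow> 'a \<Rightarrow> bool" where
  "primitive_root_of_unity K m w \<longleftrightarrow>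
     w \<in> carrier K \<and> w [^]\<^bsub>K\<^esub> m = \<one>\<^bsub>K\<^esub> \<and>
     (\<forall>k. 0 < k \<and> k < m \<longrightarrow> w [^]\<^bsub>K\<^esub> k \<noteq> \<one>\<^bsub>K\<^esub>)"

text \<open>The Galois group Gal(K/F): ring automorphisms of K fixing F pointwise
  (taken extensional, so that distinct elements are distinct maps on K).\<close>
definition Gal :: "('a, 'm) ring_scheme \<Rightarrow> 'a set \<Rightarrow> ('a \<Rightarrow> 'a) set" where
  "Gal K F = {\<sigma>. \<sigma> \<in> ring_iso K K \<and> \<sigma> \<in> extensional (carrier K) \<and> (\<forall>x\<in>F. \<sigma> x = x)}"

text \<open>K/F is a cyclic Galois extension of degree m: [K:F] = m, the extension is
  Galois (|Gal(K/F)| = [K:F]) and Gal(K/F) is cyclic.\<close>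
definition cyclic_galois_ext :: "('a, 'm) ring_scheme \<Rightarrow> 'a set \<Rightarrow> nat \<Rightarrow> bool" where
  "cyclic_galois_ext K F m \<longleftrightarrow>
     field K \<and> subfield F K \<and>
     ring.dimension K m F (carrier K) \<and>
     card (Gal K F) = m \<and>
     (\<exists>\<sigma>\<in>Gal K F. Gal K F = {restrict (\<sigma> ^^ i) (carrier K) | i. True})"

definition nonassoc_algebra :: "('a, 'm) ring_scheme \<Rightarrow> 'a set \<Rightarrow> ('a, 'b) module \<Rightarrow> bool" where
  "nonassoc_algebra K F A \<longleftrightarrow>
     module (K\<lparr>carrier := F\<rparr>) A \<and>
     (\<forall>x\<in>carrier A. \<forall>y\<in>carrier A. x \<otimes>\<^bsub>A\<^esub> y \<in> carrier A) \<and>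
     (\<forall>x\<in>carrier A. \<forall>y\<in>carrier A. \<forall>z\<in>carrier A.
        x \<otimes>\<^bsub>A\<^esub> (y \<oplus>\<^bsub>A\<^esub> z) = x \<otimes>\<^bsub>A\<^esub> y \<oplus>\<^bsub>A\<^esub> x \<otimes>\<^bsub>A\<^esub> z \<and>
        (y \<oplus>\<^bsub>A\<^esub> z) \<otimes>\<^bsub>A\<^esub> x = y \<otimes>\<^bsub>A\<^esub> x \<oplus>\<^bsub>A\<^esub> z \<otimes>\<^bsub>A\<^esub> x) \<and>
     (\<forall>c\<in>F. \<forall>x\<in>carrier A. \<forall>y\<in>carrier A.
        c \<odot>\<^bsub>A\<^esub> (x \<otimes>\<^bsub>A\<^esub> y) = (c \<odot>\<^bsub>A\<^esub> x) \<otimes>\<^bsub>A\<^esub> y \<and>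
        c \<odot>\<^bsub>A\<^esub> (x \<otimes>\<^bsub>A\<^esub> y) = x \<otimes>\<^bsub>A\<^esub> (c \<odot>\<^bsub>A\<^esub> y)) \<and>
     \<one>\<^bsub>A\<^esub> \<in> carrier A \<and>
     (\<forall>x\<in>carrier A. \<one>\<^bsub>A\<^esub> \<otimes>\<^bsub>A\<^esub> x = x \<and> x \<otimes>\<^bsub>A\<^esub> \<one>\<^bsub>A\<^esub> = x)"

definition nonassoc_division_algebra :: "('a, 'm) ring_scheme \<Rightarrow> 'a set \<Rightarrow> ('a, 'b) module \<Rightarrow> bool" where
  "nonassoc_division_algebra K F A \<longleftrightarrow>
     nonassoc_algebra K F A \<and> carrier A \<noteq> {\<zero>\<^bsub>A\<^esub>} \<and>
     (\<forall>a\<in>carrier A. a \<noteq> \<zero>\<^bsub>A\<^esub> \<longrightarrow>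
        bij_betw (\<lambda>x. a \<otimes>\<^bsub>A\<^esub> x) (carrier A) (carrier A) \<and>
        bij_betw (\<lambda>x. x \<otimes>\<^bsub>A\<^esub> a) (carrier A) (carrier A))"

definition Aut :: "'a set \<Rightarrow> ('a, 'b) module \<Rightarrow> ('b \<Rightarrow> 'b) set" where
  "Aut F A = {h. bij_betw h (carrier A) (carrier A) \<and> h \<in> extensional (carrier A) \<and>
     (\<forall>x\<in>carrier A. \<forall>y\<in>carrier A.
        h (x \<oplus>\<^bsub>A\<^esub> y) = h x \<oplus>\<^bsub>A\<^esub> h y \<and> h (x \<otimes>\<^bsub>A\<^esub> y) = h x \<otimes>\<^bsub>A\<^esub> h y) \<and>
     (\<forall>c\<in>F. \<forall>x\<in>carrier A. h (c \<odot>\<^bsub>A\<^esub> x) = c \<odot>\<^bsub>A\<^esub> h x)}"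

definition free_left_module_rank ::
  "('a, 'm) ring_scheme \<Rightarrow> ('a \<Rightarrow> 'b) \<Rightarrow> ('a, 'b) module \<Rightarrow> nat \<Rightarrow> bool" where
  "free_left_module_rank K \<iota> A m \<longleftrightarrow>
     module K (A\<lparr>smult := (\<lambda>d x. \<iota> d \<otimes>\<^bsub>A\<^esub> x)\<rparr>) \<and>
     (\<exists>b. (\<forall>i<m. b i \<in> carrier A) \<and>
        (\<forall>x\<in>carrier A. \<exists>!c. c \<in> {..<m} \<rightarrow>\<^sub>E carrier K \<and>
            x = finsum A (\<lambda>i. \<iota> (c i) \<otimes>\<^bsub>A\<^esub> b i) {..<m}))"

text \<open>A (an F-algebra, F \<subseteq> K) is a nonassociative cyclic extension of degree m of the field K,
  where K is identified with the subalgebra D = \<iota>(K) of A via the embedding \<iota>.\<close>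
definition nonassoc_cyclic_extension ::
  "('a, 'm) ring_scheme \<Rightarrow> 'a set \<Rightarrow> ('a, 'b) module \<Rightarrow> ('a \<Rightarrow> 'b) \<Rightarrow> nat \<Rightarrow> bool" where
  "nonassoc_cyclic_extension K F A \<iota> m \<longleftrightarrow>
     nonassoc_division_algebra K F A \<and>
     \<iota> \<in> ring_hom K A \<and> inj_on \<iota> (carrier K) \<and>
     (\<forall>c\<in>F. \<forall>k\<in>carrier K. \<iota> (c \<otimes>\<^bsub>K\<^esub> k) = c \<odot>\<^bsub>A\<^esub> \<iota> k) \<and>
     free_left_module_rank K \<iota> A m \<and>
     (\<exists>g\<in>Aut F A.
        card {restrict (g ^^ i) (carrier A) | i. True} = m \<and>
        (\<forall>H\<in>{restrict (g ^^ i) (carrier A) | i. True}. \<forall>k\<in>carrier K. H (\<iota> k) = \<iota> k))"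

end

theory Submission
  imports Defs
begin

text \<open>
  Let \<open>\<sigma>\<close> generate \<open>Gal(K/F)\<close> and pick \<open>a \<in> K\<close> with \<open>\<sigma>(a) \<noteq> a\<close>. The witness is the nonassociative
  cyclic algebra \<open>(K/F, \<sigma>, a) = K[t; \<sigma>] / K[t; \<sigma>](t\<^sup>m - a)\<close>, realised on \<open>K\<^sup>m\<close>.
  Since \<open>m\<close> is prime, the conjugates \<open>\<sigma>\<^sup>i(a)\<close>, \<open>i < m\<close>, are pairwise distinct, so \<open>t\<^sup>m\<close> acts on \<open>K\<^sup>m\<close>
  diagonally with distinct eigenvalues; together with the cyclic shift performed by \<open>t\<close> this leaves
  \<open>0\<close> and \<open>K\<^sup>m\<close> as the only \<open>t\<close>-invariant \<open>K\<close>-subspaces. Hence \<open>v, t v, \<dots>, t\<^sup>m\<^sup>-\<^sup>1 v\<close> are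
  \<open>K\<close>-independent for every \<open>v \<noteq> 0\<close>, i.e. there are no zero divisors, and by finite dimension left
  and right multiplications by nonzero elements are bijective. A primitive \<open>m\<close>-th root of unity
  \<open>\<omega> \<in> F\<close> yields the automorphism \<open>t \<mapsto> \<omega> t\<close>, which has order \<open>m\<close> and fixes \<open>K\<close>.
\<close>

section \<open>Iterated maps\<close>

lemma funpow_diff_on:
  assumes "inj_on f S" "f ` S \<subseteq> S" "x \<in> S" "i \<le> j" "(f ^^ i) x = (f ^^ j) x"
  shows "(f ^^ (j - i)) x = x"
proof -
  have closed: "(f ^^ n) y \<in> S" if "y \<in> S" for n y
    using that assms(2) by (induct n) auto
  have "inj_on (f ^^ n) S" for n
  proof (induct n)
    case (Suc n)
    have "inj_on ((f ^^ n) \<circ> f) S"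
      using assms(1) inj_on_subset[OF Suc assms(2)] by (rule comp_inj_on)
    then show ?case by (simp only: funpow_Suc_right)
  qed simp
  moreover have "(f ^^ i) ((f ^^ (j - i)) x) = (f ^^ i) x"
    using assms(4,5) by (simp flip: funpow_add comp_apply[of "f ^^ i"])
  ultimately show ?thesis
    using assms(3) closed by (auto dest: inj_onD)
qed

lemma funpow_prime_period:
  assumes "Factorial_Ring.prime p" "(f ^^ p) x = x" "(f ^^ n) x = x" "\<not> p dvd n"
  shows "f x = x"
proof -
  have "n \<noteq> 0" using assms(4) by (intro notI) simp
  moreover have "gcd n p = 1"
    using prime_imp_coprime[OF assms(1,4)] by (simp add: coprime_commute)
  ultimately obtain u v where uv: "n * u = p * v + 1"
    using bezout_nat[of n p] by auto
  have "(f ^^ (n * u)) x = x"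
    using funpow_mod_eq[where m = "n * u" and n = n, OF assms(3)] by simp
  moreover have "(f ^^ (p * v)) x = x"
    using funpow_mod_eq[where m = "p * v" and n = p, OF assms(2)] by simp
  then have "(f ^^ (n * u)) x = f x" by (simp add: uv)
  ultimately show ?thesis by simp
qed

lemma inj_on_prime_orbit:
  assumes "inj_on f S" "f ` S \<subseteq> S" "x \<in> S" "Factorial_Ring.prime p" "(f ^^ p) x = x" "f x \<noteq> x"
  shows "inj_on (\<lambda>i. (f ^^ i) x) {..<p}"
proof -
  have eq: "i = j" if "i \<le> j" "j < p" "(f ^^ i) x = (f ^^ j) x" for i j
  proof (rule ccontr)
    assume "i \<noteq> j"
    then have "\<not> p dvd (j - i)" using that(1,2) by (auto dest: dvd_imp_le)
    moreover have "(f ^^ (j - i)) x = x" using funpow_diff_on[OF assms(1-3) that(1,3)] .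
    ultimately show False using funpow_prime_period[OF assms(4,5)] assms(6) by blast
  qed
  show ?thesis
  proof (rule inj_onI)
    fix i j assume "i \<in> {..<p}" "j \<in> {..<p}" "(f ^^ i) x = (f ^^ j) x"
    then show "i = j" using eq[of i j] eq[of j i] by (cases "i \<le> j") auto
  qed
qed

lemma pigeonhole_range:
  assumes "finite (range g)"
  obtains i j where "i < j" "j \<le> card (range g)" "g i = g j"
proof -
  have "\<not> inj_on g {..card (range g)}"
  proof
    assume "inj_on g {..card (range g)}"
    then have "card (g ` {..card (range g)}) = Suc (card (range g))" by (simp add: card_image)
    moreover have "card (g ` {..card (range g)}) \<le> card (range g)"
      using card_mono[OF assms image_mono[OF subset_UNIV]] .
    ultimately show False by simp
  qed
  then obtain k l where kl: "k \<le> card (range g)" "l \<le> card (range g)" "k \<noteq> l" "g k = g l"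
    by (auto simp: inj_on_def)
  show ?thesis
  proof (cases "k < l")
    case True
    show ?thesis using that[OF True kl(2,4)] .
  next
    case False
    then have "l < k" using kl(3) by simp
    show ?thesis using that[OF \<open>l < k\<close> kl(1) kl(4)[symmetric]] .
  qed
qed

lemma restrict_funpow_mod:
  assumes "restrict (f ^^ p) S = restrict id S"
  shows "restrict (f ^^ n) S = restrict (f ^^ (n mod p)) S"
proof (rule restrict_ext)
  fix x assume "x \<in> S"
  then have "(f ^^ p) x = x" using fun_cong[OF assms, of x] by simp
  then show "(f ^^ n) x = (f ^^ (n mod p)) x" by (simp add: funpow_mod_eq)
qed

lemma restrict_funpow_diff:
  assumes "inj_on f S" "f ` S \<subseteq> S" "i \<le> j" "restrict (f ^^ i) S = restrict (f ^^ j) S"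
  shows "restrict (f ^^ (j - i)) S = restrict id S"
proof (rule restrict_ext)
  fix x assume "x \<in> S"
  then have "(f ^^ i) x = (f ^^ j) x" using fun_cong[OF assms(4), of x] by simp
  then show "(f ^^ (j - i)) x = id x" using funpow_diff_on[OF assms(1,2) \<open>x \<in> S\<close> assms(3)] by simp
qed

lemma iterates_period:
  assumes "inj_on f S" "f ` S \<subseteq> S" "card {restrict (f ^^ i) S | i. True} = m" "0 < m"
    and "x \<in> S"
  shows "(f ^^ m) x = x"
proof -
  define g where "g i = restrict (f ^^ i) S" for i
  have G: "{restrict (f ^^ i) S | i. True} = range g" unfolding g_def by blast
  then have card: "card (range g) = m" using assms(3) by simp
  then have "finite (range g)" using card_ge_0_finite[of "range g"] assms(4) by simp
  then obtain i j where ij: "i < j" "j \<le> card (range g)" "g i = g j"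
    by (rule pigeonhole_range)
  then have period: "g (j - i) = g 0"
    using restrict_funpow_diff[OF assms(1,2)] by (simp add: g_def)
  have "range g \<subseteq> g ` {..<j - i}"
  proof
    fix h assume "h \<in> range g"
    then obtain n where "h = g n" by blast
    then have "h = g (n mod (j - i))"
      using restrict_funpow_mod[where f = f and p = "j - i" and S = S and n = n] period
      by (simp add: g_def)
    then show "h \<in> g ` {..<j - i}" using ij(1) by simp
  qed
  then have "card (range g) \<le> card (g ` {..<j - i})" by (simp add: card_mono)
  also have "\<dots> \<le> j - i" using card_image_le[of "{..<j - i}" g] by simp
  finally have "j - i = m" using card ij(2) by simp
  then have "g m x = g 0 x" using period by simp
  then show ?thesis using assms(5) by (simp add: g_def)
qed

lemma iterates_nontrivial:
  assumes "card {restrict (f ^^ i) S | i. True} = m" "2 \<le> m"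
  shows "\<exists>x\<in>S. f x \<noteq> x"
proof (rule ccontr)
  assume "\<not> (\<exists>x\<in>S. f x \<noteq> x)"
  then have "(f ^^ i) x = x" if "x \<in> S" for i x using that by (induct i) auto
  then have "{restrict (f ^^ i) S | i. True} = {restrict id S}" by (auto intro!: ext)
  then show False using assms by simp
qed

lemma (in ring) primitive_root_pow_inj:
  assumes "primitive_root_of_unity R m w"
  shows "inj_on (\<lambda>i. w [^] i) {..<m}"
proof (rule inj_onI)
  fix i j assume ij: "i \<in> {..<m}" "j \<in> {..<m}" "w [^] i = w [^] j"
  have w: "w \<in> carrier R" "w [^] m = \<one>" "\<And>k. 0 < k \<Longrightarrow> k < m \<Longrightarrow> w [^] k \<noteq> \<one>"
    using assms by (auto simp: primitive_root_of_unity_def)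
  have "w \<in> Units R"
  proof -
    have "w \<otimes> w [^] (m - 1) = \<one>" "w [^] (m - 1) \<otimes> w = \<one>"
      using w ij(1) by (simp_all flip: nat_pow_Suc2 nat_pow_Suc)
    then show ?thesis using w(1) by (auto simp: Units_def)
  qed
  have pow_diff: "w [^] (l - k) = \<one>" if "k \<le> l" "w [^] k = w [^] l" for k l :: nat
  proof -
    have "w [^] k \<otimes> w [^] (l - k) = w [^] l" using that(1) w(1) by (simp add: nat_pow_mult)
    also have "\<dots> = w [^] k \<otimes> \<one>" using that(2) w(1) by simp
    finally show ?thesis
      using Units_l_cancel[OF Units_pow_closed[OF \<open>w \<in> Units R\<close>] nat_pow_closed[OF w(1)] one_closed]
      by simp
  qed
  have le_eq: "k = l" if "k \<le> l" "l < m" "w [^] k = w [^] l" for k l :: nat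
  proof (rule ccontr)
    assume "k \<noteq> l"
    then have "0 < l - k" "l - k < m" using that by auto
    then show False using w(3) pow_diff[OF that(1,3)] by simp
  qed
  show "i = j"
  proof (cases "i \<le> j")
    case True
    then show ?thesis using le_eq[OF True _ ij(3)] ij(2) by simp
  next
    case False
    then show ?thesis using le_eq[OF _ _ ij(3)[symmetric]] ij(1) by simp
  qed
qed

section \<open>Linear maps over a subfield of a ring\<close>

context ring
begin

lemma combine_add_right:
  assumes "length Us = length Vs" "set Ks \<subseteq> carrier R" "set Us \<subseteq> carrier R" "set Vs \<subseteq> carrier R"
  shows "combine Ks (map2 (\<oplus>) Us Vs) = combine Ks Us \<oplus> combine Ks Vs"
  using assms
proof (induct Ks arbitrary: Us Vs)
  case (Cons k Ks)
  then show ?case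
  proof (cases Us)
    case (Cons u Us')
    then obtain v Vs' where "Vs = v # Vs'" using Cons.prems(1) by (cases Vs) auto
    then show ?thesis using Cons Cons.prems Cons.hyps[of Us' Vs']
      by (simp add: r_distr a_ac combine_in_carrier)
  qed simp
qed simp

lemma combine_linear_map:
  assumes "KK \<subseteq> carrier R" "\<phi> \<in> carrier R \<rightarrow> carrier R"
    and "\<And>x y. x \<in> carrier R \<Longrightarrow> y \<in> carrier R \<Longrightarrow> \<phi> (x \<oplus> y) = \<phi> x \<oplus> \<phi> y"
    and "\<And>k x. k \<in> KK \<Longrightarrow> x \<in> carrier R \<Longrightarrow> \<phi> (k \<otimes> x) = k \<otimes> \<phi> x"
    and "set Ks \<subseteq> KK" "set Us \<subseteq> carrier R"
  shows "\<phi> (combine Ks Us) = combine Ks (map \<phi> Us)"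
  using assms(5,6)
proof (induct Ks Us rule: combine.induct)
  case (1 k Ks u Us)
  then show ?case using assms(1-4) by (auto simp: subset_iff)
next
  case ("2_1" Us)
  then show ?case using assms(2) assms(3)[of \<zero> \<zero>] by (simp add: Pi_iff)
next
  case ("2_2" Ks)
  then show ?case using assms(2) assms(3)[of \<zero> \<zero>] by (simp add: Pi_iff)
qed

lemma additive_inj_on:
  assumes "\<phi> \<in> carrier R \<rightarrow> carrier R"
    and "\<And>x y. x \<in> carrier R \<Longrightarrow> y \<in> carrier R \<Longrightarrow> \<phi> (x \<oplus> y) = \<phi> x \<oplus> \<phi> y"
    and "\<And>x. x \<in> carrier R \<Longrightarrow> \<phi> x = \<zero> \<Longrightarrow> x = \<zero>"
  shows "inj_on \<phi> (carrier R)"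
proof (rule inj_onI)
  fix x y assume xy: "x \<in> carrier R" "y \<in> carrier R" "\<phi> x = \<phi> y"
  have "x \<ominus> y \<oplus> y = x" using xy by (simp add: a_minus_def a_assoc l_neg)
  then have "\<phi> (x \<ominus> y) \<oplus> \<phi> y = \<zero> \<oplus> \<phi> y"
    using xy funcset_mem[OF assms(1) xy(2)] assms(2)[of "x \<ominus> y" y] by simp
  then have "\<phi> (x \<ominus> y) = \<zero>" using xy assms(1) by (auto intro: add.r_cancel)
  then show "x = y" using assms(3)[of "x \<ominus> y"] xy by (simp add: r_right_minus_eq)
qed

lemma linear_inj_independent:
  assumes "subfield KK R" "\<phi> \<in> carrier R \<rightarrow> carrier R"
    and "\<And>x y. x \<in> carrier R \<Longrightarrow> y \<in> carrier R \<Longrightarrow> \<phi> (x \<oplus> y) = \<phi> x \<oplus> \<phi> y"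
    and "\<And>k x. k \<in> KK \<Longrightarrow> x \<in> carrier R \<Longrightarrow> \<phi> (k \<otimes> x) = k \<otimes> \<phi> x"
    and "inj_on \<phi> (carrier R)" "independent KK Us"
  shows "independent KK (map \<phi> Us)"
proof -
  have KK: "KK \<subseteq> carrier R" using assms(1) by (rule subfieldE(3))
  have Us: "set Us \<subseteq> carrier R" using assms(6) by (rule independent_in_carrier)
  then have \<phi>Us: "set (map \<phi> Us) \<subseteq> carrier R" using assms(2) by auto
  show ?thesis
  proof (rule trivial_combine_imp_independent[OF assms(1) \<phi>Us])
    fix Ks assume Ks: "set Ks \<subseteq> KK" "combine Ks (map \<phi> Us) = \<zero>"
    have "\<phi> (combine Ks Us) = \<phi> (combine [] Us)"
      using Ks combine_linear_map[OF KK assms(2-4) Ks(1) Us]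
        combine_linear_map[OF KK assms(2-4), of "[]" Us] Us
      by simp
    then have "combine Ks Us = \<zero>"
      using assms(5) Ks(1) KK Us by (auto dest: inj_onD intro: combine_in_carrier)
    then show "set (take (length (map \<phi> Us)) Ks) \<subseteq> {\<zero>}"
      using independent_imp_trivial_combine[OF assms(1,6) Ks(1)] by simp
  qed
qed

lemma linear_trivial_kernel_imp_bij:
  assumes "subfield KK R" "dimension n KK (carrier R)" "\<phi> \<in> carrier R \<rightarrow> carrier R"
    and "\<And>x y. x \<in> carrier R \<Longrightarrow> y \<in> carrier R \<Longrightarrow> \<phi> (x \<oplus> y) = \<phi> x \<oplus> \<phi> y"
    and "\<And>k x. k \<in> KK \<Longrightarrow> x \<in> carrier R \<Longrightarrow> \<phi> (k \<otimes> x) = k \<otimes> \<phi> x"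
    and "\<And>x. x \<in> carrier R \<Longrightarrow> \<phi> x = \<zero> \<Longrightarrow> x = \<zero>"
  shows "bij_betw \<phi> (carrier R) (carrier R)"
proof -
  have inj: "inj_on \<phi> (carrier R)" using assms(3,4,6) by (rule additive_inj_on)
  have KK: "KK \<subseteq> carrier R" using assms(1) by (rule subfieldE(3))
  obtain Us where Us: "set Us \<subseteq> carrier R" "independent KK Us" "length Us = n"
    using exists_base[OF assms(1,2)] by blast
  have \<phi>Us: "set (map \<phi> Us) \<subseteq> carrier R" using Us(1) assms(3) by auto
  have "Span KK (map \<phi> Us) = carrier R"
    using independent_length_eq_dimension[OF assms(1,2) linear_inj_independent[OF assms(1,3-5) inj Us(2)] \<phi>Us]
      Us(3) by simp
  have "y \<in> \<phi> ` carrier R" if "y \<in> carrier R" for y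
  proof -
    have "y \<in> Span KK (map \<phi> Us)" using that \<open>Span KK (map \<phi> Us) = carrier R\<close> by simp
    then obtain Ks where Ks: "set Ks \<subseteq> KK" "y = combine Ks (map \<phi> Us)"
      using Span_eq_combine_set[OF assms(1) \<phi>Us] by blast
    then have "y = \<phi> (combine Ks Us)" using combine_linear_map[OF KK assms(3-5) Ks(1) Us(1)] by simp
    moreover have "combine Ks Us \<in> carrier R" using Ks(1) KK Us(1) by (intro combine_in_carrier) auto
    ultimately show ?thesis by (rule image_eqI)
  qed
  then show ?thesis using assms(3) inj by (auto simp: bij_betw_def)
qed

end

lemma (in cring) combine_smult_right:
  assumes "c \<in> carrier R" "set Ks \<subseteq> carrier R" "set Us \<subseteq> carrier R"
  shows "combine Ks (map ((\<otimes>) c) Us) = c \<otimes> combine Ks Us"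
  using assms(2,3)
  by (induct Ks Us rule: combine.induct) (auto simp: assms(1) r_distr m_lcomm)

section \<open>The nonassociative cyclic algebra \<open>(K/F, \<sigma>, a)\<close>\<close>

text \<open>\<open>K\<^sup>m\<close> is made a ring (componentwise) containing the diagonal copy of \<open>K\<close>, so that the
  linear algebra of \<^theory>\<open>HOL-Algebra.Embedded_Algebras\<close> (spans, independence and dimension
  over a subfield of a ring) applies to \<open>K\<^sup>m\<close> as a vector space over \<open>K\<close> and over \<open>F\<close>.\<close>
definition vec_ring :: "('a, 'm) ring_scheme \<Rightarrow> nat \<Rightarrow> (nat \<Rightarrow> 'a) ring" where
  "vec_ring K m =
     \<lparr>carrier = {..<m} \<rightarrow>\<^sub>E carrier K,
      monoid.mult = (\<lambda>f g. \<lambda>i\<in>{..<m}. f i \<otimes>\<^bsub>K\<^esub> g i),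
      one = (\<lambda>i\<in>{..<m}. \<one>\<^bsub>K\<^esub>),
      ring.zero = (\<lambda>i\<in>{..<m}. \<zero>\<^bsub>K\<^esub>),
      ring.add = (\<lambda>f g. \<lambda>i\<in>{..<m}. f i \<oplus>\<^bsub>K\<^esub> g i)\<rparr>"

lemma vec_ring_simps:
  "carrier (vec_ring K m) = {..<m} \<rightarrow>\<^sub>E carrier K"
  "f \<otimes>\<^bsub>vec_ring K m\<^esub> g = (\<lambda>i\<in>{..<m}. f i \<otimes>\<^bsub>K\<^esub> g i)"
  "\<one>\<^bsub>vec_ring K m\<^esub> = (\<lambda>i\<in>{..<m}. \<one>\<^bsub>K\<^esub>)"
  "\<zero>\<^bsub>vec_ring K m\<^esub> = (\<lambda>i\<in>{..<m}. \<zero>\<^bsub>K\<^esub>)"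
  "f \<oplus>\<^bsub>vec_ring K m\<^esub> g = (\<lambda>i\<in>{..<m}. f i \<oplus>\<^bsub>K\<^esub> g i)"
  by (simp_all add: vec_ring_def)

lemma cring_vec_ring:
  assumes "cring K"
  shows "cring (vec_ring K m)"
proof -
  interpret K: cring K by fact
  show ?thesis
  proof (rule cringI)
    show "abelian_group (vec_ring K m)"
    proof (rule abelian_groupI)
      fix x assume x: "x \<in> carrier (vec_ring K m)"
      show "\<exists>y\<in>carrier (vec_ring K m). y \<oplus>\<^bsub>vec_ring K m\<^esub> x = \<zero>\<^bsub>vec_ring K m\<^esub>"
        using x by (intro bexI[of _ "\<lambda>i\<in>{..<m}. \<ominus>\<^bsub>K\<^esub> x i"])
          (auto simp: vec_ring_simps PiE_iff K.l_neg)
    qed (auto simp: vec_ring_simps PiE_iff extensional_def K.a_ac intro!: ext)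
    show "comm_monoid (vec_ring K m)"
      by (rule comm_monoidI) (auto simp: vec_ring_simps PiE_iff extensional_def K.m_ac intro!: ext)
  qed (auto simp: vec_ring_simps PiE_iff K.l_distr)
qed

locale nonassoc_cyclic_algebra = K: field K
  for K :: "'a ring" (structure) +
  fixes F :: "'a set" and m :: nat and \<sigma> :: "'a \<Rightarrow> 'a" and a :: 'a
  assumes subfield_F: "subfield F K"
    and m_pos: "0 < m"
    and \<sigma>_hom: "\<sigma> \<in> ring_hom K K"
    and \<sigma>_fixes_F: "\<And>c. c \<in> F \<Longrightarrow> \<sigma> c = c"
    and a_closed: "a \<in> carrier K"

sublocale nonassoc_cyclic_algebra \<subseteq> R: cring "vec_ring K m"
  using cring_vec_ring[OF K.cring_axioms] .

context nonassoc_cyclic_algebra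
begin

abbreviation R :: "(nat \<Rightarrow> 'a) ring" where "R \<equiv> vec_ring K m"

lemma F_subset: "F \<subseteq> carrier K"
  using subfield_F by (rule subfieldE(3))

lemma \<sigma>_closed [simp]: "x \<in> carrier K \<Longrightarrow> \<sigma> x \<in> carrier K"
  using \<sigma>_hom by (rule ring_hom_closed)

lemma \<sigma>_add [simp]: "x \<in> carrier K \<Longrightarrow> y \<in> carrier K \<Longrightarrow> \<sigma> (x \<oplus> y) = \<sigma> x \<oplus> \<sigma> y"
  using \<sigma>_hom by (rule ring_hom_add)

lemma \<sigma>_mult [simp]: "x \<in> carrier K \<Longrightarrow> y \<in> carrier K \<Longrightarrow> \<sigma> (x \<otimes> y) = \<sigma> x \<otimes> \<sigma> y"
  using \<sigma>_hom by (rule ring_hom_mult)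

lemma \<sigma>_one [simp]: "\<sigma> \<one> = \<one>"
  using \<sigma>_hom by (rule ring_hom_one)

lemma \<sigma>_zero [simp]: "\<sigma> \<zero> = \<zero>"
  using \<sigma>_hom K.ring_axioms K.ring_axioms by (rule ring_hom_zero)

lemma \<sigma>_pow_hom: "\<sigma> ^^ n \<in> ring_hom K K"
proof (induct n)
  case (Suc n)
  show ?case using ring_hom_trans[OF Suc \<sigma>_hom] by (simp only: funpow.simps(2))
qed (simp flip: id_def)

lemma \<sigma>_pow_closed [simp]: "x \<in> carrier K \<Longrightarrow> (\<sigma> ^^ n) x \<in> carrier K"
  using \<sigma>_pow_hom by (rule ring_hom_closed)

lemma \<sigma>_pow_one [simp]: "(\<sigma> ^^ n) \<one> = \<one>"
  using \<sigma>_pow_hom by (rule ring_hom_one)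

lemma \<sigma>_pow_zero [simp]: "(\<sigma> ^^ n) \<zero> = \<zero>"
  using \<sigma>_pow_hom K.ring_axioms K.ring_axioms by (rule ring_hom_zero)

lemma \<sigma>_pow_fixes_F [simp]: "c \<in> F \<Longrightarrow> (\<sigma> ^^ n) c = c"
  by (induct n) (simp_all add: \<sigma>_fixes_F)

lemma vec_eqI: "v \<in> carrier R \<Longrightarrow> w \<in> carrier R \<Longrightarrow> (\<And>i. i < m \<Longrightarrow> v i = w i) \<Longrightarrow> v = w"
  by (rule PiE_ext) (auto simp: vec_ring_simps)

lemma vec_apply_closed [simp]: "w \<in> carrier R \<Longrightarrow> i < m \<Longrightarrow> w i \<in> carrier K"
  by (auto simp: vec_ring_simps)

lemma vec_ops_apply [simp]:
  "i < m \<Longrightarrow> (v \<oplus>\<^bsub>R\<^esub> w) i = v i \<oplus> w i"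
  "i < m \<Longrightarrow> (v \<otimes>\<^bsub>R\<^esub> w) i = v i \<otimes> w i"
  "i < m \<Longrightarrow> \<zero>\<^bsub>R\<^esub> i = \<zero>"
  by (simp_all add: vec_ring_simps)

lemma vec_minus_apply [simp]:
  "v \<in> carrier R \<Longrightarrow> w \<in> carrier R \<Longrightarrow> i < m \<Longrightarrow> (v \<ominus>\<^bsub>R\<^esub> w) i = v i \<ominus> w i"
proof -
  assume vw: "v \<in> carrier R" "w \<in> carrier R" and i: "i < m"
  have "(\<ominus>\<^bsub>R\<^esub> w \<oplus>\<^bsub>R\<^esub> w) i = \<zero>\<^bsub>R\<^esub> i" using R.l_neg[OF vw(2)] by simp
  then have "(\<ominus>\<^bsub>R\<^esub> w) i \<oplus> w i = \<zero>" using i by simp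
  then have "(\<ominus>\<^bsub>R\<^esub> w) i = \<ominus> w i"
    using vw(2) i by (simp add: K.minus_equality)
  then show ?thesis using i by (simp add: a_minus_def K.minus_eq)
qed

definition scal :: "'a \<Rightarrow> nat \<Rightarrow> 'a" where
  "scal k = (\<lambda>i\<in>{..<m}. k)"

lemma scal_apply [simp]: "i < m \<Longrightarrow> scal k i = k"
  by (simp add: scal_def)

lemma scal_hom: "scal \<in> ring_hom K R"
  by (rule ring_hom_memI) (auto simp: scal_def vec_ring_simps)

lemma scal_closed [simp]: "k \<in> carrier K \<Longrightarrow> scal k \<in> carrier R"
  using scal_hom by (rule ring_hom_closed)

lemma scal_add: "k \<in> carrier K \<Longrightarrow> l \<in> carrier K \<Longrightarrow> scal (k \<oplus> l) = scal k \<oplus>\<^bsub>R\<^esub> scal l"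
  using scal_hom by (rule ring_hom_add)

lemma scal_mult: "k \<in> carrier K \<Longrightarrow> l \<in> carrier K \<Longrightarrow> scal (k \<otimes> l) = scal k \<otimes>\<^bsub>R\<^esub> scal l"
  using scal_hom by (rule ring_hom_mult)

lemma scal_one: "scal \<one> = \<one>\<^bsub>R\<^esub>"
  using scal_hom by (rule ring_hom_one)

lemma scal_zero: "scal \<zero> = \<zero>\<^bsub>R\<^esub>"
  using scal_hom K.ring_axioms R.ring_axioms by (rule ring_hom_zero)

lemma scal_inj: "inj_on scal (carrier K)"
  using m_pos by (auto intro!: inj_onI dest: fun_cong[of _ _ 0])

definition unit_vec :: "nat \<Rightarrow> nat \<Rightarrow> 'a" where
  "unit_vec j = (\<lambda>i\<in>{..<m}. if i = j then \<one> else \<zero>)"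

lemma unit_vec_apply: "i < m \<Longrightarrow> unit_vec j i = (if i = j then \<one> else \<zero>)"
  by (simp add: unit_vec_def)

lemma unit_vec_closed [simp]: "unit_vec j \<in> carrier R"
  by (auto simp: unit_vec_def vec_ring_simps)

lemma unit_vec_nonzero: "j < m \<Longrightarrow> unit_vec j \<noteq> \<zero>\<^bsub>R\<^esub>"
  by (auto simp: unit_vec_def vec_ring_simps dest: fun_cong[of _ _ j])

text \<open>Identifying \<open>x \<in> K\<^sup>m\<close> with \<open>\<Sum>i<m. x\<^sub>i t\<^sup>i\<close>, \<open>tmul\<close> is left multiplication by \<open>t\<close> in
  \<open>K[t; \<sigma>]\<close> modulo \<open>t\<^sup>m - a\<close>, i.e. subject to \<open>t k = \<sigma>(k) t\<close> and \<open>t\<^sup>m = a\<close>.\<close>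
definition tmul :: "(nat \<Rightarrow> 'a) \<Rightarrow> nat \<Rightarrow> 'a" where
  "tmul w = (\<lambda>i\<in>{..<m}. if i = 0 then a \<otimes> \<sigma> (w (m - 1)) else \<sigma> (w (i - 1)))"

lemma tmul_apply: "i < m \<Longrightarrow> tmul w i = (if i = 0 then a \<otimes> \<sigma> (w (m - 1)) else \<sigma> (w (i - 1)))"
  by (simp add: tmul_def)

lemma tmul_closed [simp]: "w \<in> carrier R \<Longrightarrow> tmul w \<in> carrier R"
  using m_pos a_closed by (auto simp: tmul_def vec_ring_simps)

lemma tmul_pow_closed [simp]: "w \<in> carrier R \<Longrightarrow> (tmul ^^ n) w \<in> carrier R"
  by (induct n) auto

lemma tmul_add: "v \<in> carrier R \<Longrightarrow> w \<in> carrier R \<Longrightarrow> tmul (v \<oplus>\<^bsub>R\<^esub> w) = tmul v \<oplus>\<^bsub>R\<^esub> tmul w"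
  using m_pos a_closed by (intro vec_eqI) (auto simp: tmul_apply K.r_distr)

lemma tmul_scal:
  "k \<in> carrier K \<Longrightarrow> w \<in> carrier R \<Longrightarrow> tmul (scal k \<otimes>\<^bsub>R\<^esub> w) = scal (\<sigma> k) \<otimes>\<^bsub>R\<^esub> tmul w"
  using m_pos a_closed by (intro vec_eqI) (auto simp: tmul_apply K.m_lcomm)

lemma tmul_pow_add:
  "v \<in> carrier R \<Longrightarrow> w \<in> carrier R \<Longrightarrow> (tmul ^^ n) (v \<oplus>\<^bsub>R\<^esub> w) = (tmul ^^ n) v \<oplus>\<^bsub>R\<^esub> (tmul ^^ n) w"
  by (induct n) (auto simp: tmul_add)

lemma tmul_pow_scal:
  "k \<in> carrier K \<Longrightarrow> w \<in> carrier R \<Longrightarrow>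
     (tmul ^^ n) (scal k \<otimes>\<^bsub>R\<^esub> w) = scal ((\<sigma> ^^ n) k) \<otimes>\<^bsub>R\<^esub> (tmul ^^ n) w"
  by (induct n) (auto simp: tmul_scal)

lemma tmul_pow_apply:
  assumes "w \<in> carrier R" "n \<le> m" "i < m"
  shows "(tmul ^^ n) w i =
    (if n \<le> i then (\<sigma> ^^ n) (w (i - n)) else (\<sigma> ^^ i) a \<otimes> (\<sigma> ^^ n) (w (m + i - n)))"
  using assms(2,3)
proof (induct n arbitrary: i)
  case (Suc n)
  show ?case
  proof (cases i)
    case 0
    have "n \<le> m - 1" using Suc.prems by simp
    then show ?thesis
      using 0 Suc.hyps[of "m - 1"] Suc.prems assms(1) by (simp add: tmul_apply Suc_diff_Suc)
  next
    case (Suc j)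
    have "\<sigma> ((\<sigma> ^^ j) a) = (\<sigma> ^^ i) a" using Suc by simp
    then show ?thesis
      using Suc.hyps[of j] Suc.prems assms(1) a_closed \<open>i = Suc j\<close>
      by (auto simp: tmul_apply)
  qed
qed simp

lemma tmul_zero: "tmul \<zero>\<^bsub>R\<^esub> = \<zero>\<^bsub>R\<^esub>"
  using m_pos a_closed by (intro vec_eqI) (auto simp: tmul_apply)

lemma tmul_pow_unit_vec0: "i < m \<Longrightarrow> (tmul ^^ i) (unit_vec 0) = unit_vec i"
  using a_closed by (intro vec_eqI) (auto simp: tmul_pow_apply unit_vec_apply)

primrec tpowers :: "(nat \<Rightarrow> 'a) \<Rightarrow> nat \<Rightarrow> (nat \<Rightarrow> 'a) list" where
  "tpowers y 0 = []"
| "tpowers y (Suc n) = (tmul ^^ n) y # tpowers y n"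

primrec coeffs :: "(nat \<Rightarrow> 'a) \<Rightarrow> nat \<Rightarrow> (nat \<Rightarrow> 'a) list" where
  "coeffs x 0 = []"
| "coeffs x (Suc n) = scal (x n) # coeffs x n"

primrec unit_vecs :: "nat \<Rightarrow> (nat \<Rightarrow> 'a) list" where
  "unit_vecs 0 = []"
| "unit_vecs (Suc n) = unit_vec n # unit_vecs n"

text \<open>The product \<open>(\<Sum>i<m. x\<^sub>i t\<^sup>i) y = (\<Sum>i<m. x\<^sub>i (t\<^sup>i y))\<close>.\<close>
definition mul :: "(nat \<Rightarrow> 'a) \<Rightarrow> (nat \<Rightarrow> 'a) \<Rightarrow> nat \<Rightarrow> 'a" where
  "mul x y = R.combine (coeffs x m) (tpowers y m)"

definition embed :: "'a \<Rightarrow> nat \<Rightarrow> 'a" where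
  "embed k = (\<lambda>i\<in>{..<m}. if i = 0 then k else \<zero>)"

lemma length_tpowers [simp]: "length (tpowers y n) = n"
  by (induct n) auto

lemma length_coeffs [simp]: "length (coeffs x n) = n"
  by (induct n) auto

lemma set_tpowers_eq: "set (tpowers v n) = (\<lambda>k. (tmul ^^ k) v) ` {..<n}"
  by (induct n) (auto simp: lessThan_Suc)

lemma set_coeffs_eq: "set (coeffs x n) = (\<lambda>i. scal (x i)) ` {..<n}"
  by (induct n) (auto simp: lessThan_Suc)

lemma set_unit_vecs_eq: "set (unit_vecs n) = unit_vec ` {..<n}"
  by (induct n) (auto simp: lessThan_Suc)

lemma length_unit_vecs [simp]: "length (unit_vecs n) = n"
  by (induct n) auto

lemma set_tpowers: "y \<in> carrier R \<Longrightarrow> set (tpowers y n) \<subseteq> carrier R"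
  by (induct n) auto

lemma set_coeffs: "x \<in> carrier R \<Longrightarrow> n \<le> m \<Longrightarrow> set (coeffs x n) \<subseteq> scal ` carrier K"
  by (induct n) auto

lemma set_coeffs_carrier: "x \<in> carrier R \<Longrightarrow> n \<le> m \<Longrightarrow> set (coeffs x n) \<subseteq> carrier R"
  using set_coeffs by fastforce

lemma set_unit_vecs: "set (unit_vecs n) \<subseteq> carrier R"
  by (induct n) auto

lemma coeffs_add:
  "x \<in> carrier R \<Longrightarrow> y \<in> carrier R \<Longrightarrow> n \<le> m \<Longrightarrow>
     coeffs (x \<oplus>\<^bsub>R\<^esub> y) n = map2 (\<oplus>\<^bsub>R\<^esub>) (coeffs x n) (coeffs y n)"
  by (induct n) (auto simp: scal_add)

lemma coeffs_scal:
  "k \<in> carrier K \<Longrightarrow> x \<in> carrier R \<Longrightarrow> n \<le> m \<Longrightarrow>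
     coeffs (scal k \<otimes>\<^bsub>R\<^esub> x) n = map ((\<otimes>\<^bsub>R\<^esub>) (scal k)) (coeffs x n)"
  by (induct n) (auto simp: scal_mult)

lemma tpowers_add:
  "y \<in> carrier R \<Longrightarrow> z \<in> carrier R \<Longrightarrow>
     tpowers (y \<oplus>\<^bsub>R\<^esub> z) n = map2 (\<oplus>\<^bsub>R\<^esub>) (tpowers y n) (tpowers z n)"
  by (induct n) (auto simp: tmul_pow_add)

lemma tpowers_scal:
  "c \<in> F \<Longrightarrow> y \<in> carrier R \<Longrightarrow> tpowers (scal c \<otimes>\<^bsub>R\<^esub> y) n = map ((\<otimes>\<^bsub>R\<^esub>) (scal c)) (tpowers y n)"
  using F_subset by (induct n) (auto simp: tmul_pow_scal)

lemma tpowers_unit_vec0: "n \<le> m \<Longrightarrow> tpowers (unit_vec 0) n = unit_vecs n"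
  by (induct n) (auto simp: tmul_pow_unit_vec0)

lemma mul_closed: "x \<in> carrier R \<Longrightarrow> y \<in> carrier R \<Longrightarrow> mul x y \<in> carrier R"
  unfolding mul_def using set_coeffs_carrier set_tpowers by (intro R.combine_in_carrier) auto

lemma mul_add_left:
  "x \<in> carrier R \<Longrightarrow> y \<in> carrier R \<Longrightarrow> z \<in> carrier R \<Longrightarrow>
     mul (x \<oplus>\<^bsub>R\<^esub> y) z = mul x z \<oplus>\<^bsub>R\<^esub> mul y z"
  unfolding mul_def using R.combine_add[of "coeffs x m" "tpowers z m" "coeffs y m"]
  by (simp add: coeffs_add set_coeffs_carrier set_tpowers)

lemma mul_add_right:
  "x \<in> carrier R \<Longrightarrow> y \<in> carrier R \<Longrightarrow> z \<in> carrier R \<Longrightarrow>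
     mul x (y \<oplus>\<^bsub>R\<^esub> z) = mul x y \<oplus>\<^bsub>R\<^esub> mul x z"
  unfolding mul_def using R.combine_add_right[of "tpowers y m" "tpowers z m" "coeffs x m"]
  by (simp add: tpowers_add set_coeffs_carrier set_tpowers)

lemma mul_scal_left:
  "k \<in> carrier K \<Longrightarrow> x \<in> carrier R \<Longrightarrow> y \<in> carrier R \<Longrightarrow>
     mul (scal k \<otimes>\<^bsub>R\<^esub> x) y = scal k \<otimes>\<^bsub>R\<^esub> mul x y"
  by (simp add: mul_def coeffs_scal R.combine_r_distr set_coeffs_carrier set_tpowers)

lemma mul_scal_right:
  "c \<in> F \<Longrightarrow> x \<in> carrier R \<Longrightarrow> y \<in> carrier R \<Longrightarrow>
     mul x (scal c \<otimes>\<^bsub>R\<^esub> y) = scal c \<otimes>\<^bsub>R\<^esub> mul x y"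
proof -
  assume "c \<in> F" "x \<in> carrier R" "y \<in> carrier R"
  moreover have "scal c \<in> carrier R" using \<open>c \<in> F\<close> F_subset by auto
  ultimately show ?thesis
    by (simp add: mul_def tpowers_scal R.combine_smult_right set_coeffs_carrier set_tpowers)
qed

lemma embed_apply: "i < m \<Longrightarrow> embed k i = (if i = 0 then k else \<zero>)"
  by (simp add: embed_def)

lemma embed_closed [simp]: "k \<in> carrier K \<Longrightarrow> embed k \<in> carrier R"
  by (auto simp: embed_def vec_ring_simps)

lemma mul_embed:
  assumes "k \<in> carrier K" "y \<in> carrier R"
  shows "mul (embed k) y = scal k \<otimes>\<^bsub>R\<^esub> y"
proof -
  have "R.combine (coeffs (embed k) n) (tpowers y n) = scal k \<otimes>\<^bsub>R\<^esub> y" if "0 < n" "n \<le> m" for n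
    using that
  proof (induct n)
    case (Suc n)
    show ?case
    proof (cases "n = 0")
      case True
      then show ?thesis using assms m_pos by (simp add: embed_def)
    next
      case False
      then have "embed k n = \<zero>" using Suc.prems by (simp add: embed_def)
      then show ?thesis using False Suc assms by (simp add: scal_zero)
    qed
  qed simp
  then show ?thesis using m_pos by (simp add: mul_def)
qed

lemma combine_coeffs_unit_vecs_apply:
  "x \<in> carrier R \<Longrightarrow> n \<le> m \<Longrightarrow> j < m \<Longrightarrow>
     R.combine (coeffs x n) (unit_vecs n) j = (if j < n then x j else \<zero>)"
  by (induct n) (auto simp: unit_vec_apply less_Suc_eq)

lemma combine_coeffs_unit_vecs: "x \<in> carrier R \<Longrightarrow> R.combine (coeffs x m) (unit_vecs m) = x"
  using set_coeffs_carrier set_unit_vecs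
  by (intro vec_eqI) (auto simp: combine_coeffs_unit_vecs_apply)

lemma mul_unit_vec0_right: "x \<in> carrier R \<Longrightarrow> mul x (unit_vec 0) = x"
  by (simp add: mul_def tpowers_unit_vec0 combine_coeffs_unit_vecs)

lemma mul_unit_vec0_left: "y \<in> carrier R \<Longrightarrow> mul (unit_vec 0) y = y"
proof -
  have "unit_vec 0 = embed \<one>" by (simp add: unit_vec_def embed_def)
  then show "y \<in> carrier R \<Longrightarrow> ?thesis" by (simp add: mul_embed scal_one)
qed

definition cyclic_alg :: "('a, nat \<Rightarrow> 'a) module" where
  "cyclic_alg =
     \<lparr>carrier = carrier R, monoid.mult = mul, one = unit_vec 0, ring.zero = \<zero>\<^bsub>R\<^esub>,
      ring.add = (\<oplus>\<^bsub>R\<^esub>), smult = (\<lambda>c x. scal c \<otimes>\<^bsub>R\<^esub> x)\<rparr>"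

lemma cyclic_alg_simps:
  "carrier cyclic_alg = carrier R" "x \<otimes>\<^bsub>cyclic_alg\<^esub> y = mul x y" "\<one>\<^bsub>cyclic_alg\<^esub> = unit_vec 0"
  "\<zero>\<^bsub>cyclic_alg\<^esub> = \<zero>\<^bsub>R\<^esub>" "x \<oplus>\<^bsub>cyclic_alg\<^esub> y = x \<oplus>\<^bsub>R\<^esub> y" "c \<odot>\<^bsub>cyclic_alg\<^esub> x = scal c \<otimes>\<^bsub>R\<^esub> x"
  by (simp_all add: cyclic_alg_def)

lemma finsum_cyclic_alg: "finsum cyclic_alg f A = finsum R f A"
  by (simp add: finsum_def finprod_def cyclic_alg_def)

lemma module_scal:
  fixes S :: "('a, 'c) ring_scheme" and M :: "('a, nat \<Rightarrow> 'a, 'd) module_scheme"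
  assumes S: "cring S" "carrier S \<subseteq> carrier K"
    and S_ops: "\<And>x y. x \<otimes>\<^bsub>S\<^esub> y = x \<otimes> y" "\<And>x y. x \<oplus>\<^bsub>S\<^esub> y = x \<oplus> y" "\<one>\<^bsub>S\<^esub> = \<one>"
    and M: "carrier M = carrier R" "\<And>x y. x \<oplus>\<^bsub>M\<^esub> y = x \<oplus>\<^bsub>R\<^esub> y" "\<zero>\<^bsub>M\<^esub> = \<zero>\<^bsub>R\<^esub>"
    and M_smult: "\<And>c x. c \<in> carrier S \<Longrightarrow> x \<in> carrier R \<Longrightarrow> c \<odot>\<^bsub>M\<^esub> x = scal c \<otimes>\<^bsub>R\<^esub> x"
  shows "module S M"
proof (rule moduleI)
  interpret S: cring S by (rule S(1))
  show "cring S" by (rule S(1))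
  show "abelian_group M"
    by (rule abelian_groupI) (simp_all add: M R.a_ac)
  fix c d x y assume cd: "c \<in> carrier S" "d \<in> carrier S" and xy: "x \<in> carrier M" "y \<in> carrier M"
  have cdK: "c \<in> carrier K" "d \<in> carrier K" using cd S(2) by auto
  show "c \<odot>\<^bsub>M\<^esub> x \<in> carrier M" using cd xy cdK by (simp add: M_smult M)
  show "(c \<oplus>\<^bsub>S\<^esub> d) \<odot>\<^bsub>M\<^esub> x = c \<odot>\<^bsub>M\<^esub> x \<oplus>\<^bsub>M\<^esub> d \<odot>\<^bsub>M\<^esub> x"
    using cd xy cdK by (simp add: M_smult M, simp add: S_ops scal_add R.l_distr)
  show "c \<odot>\<^bsub>M\<^esub> (x \<oplus>\<^bsub>M\<^esub> y) = c \<odot>\<^bsub>M\<^esub> x \<oplus>\<^bsub>M\<^esub> c \<odot>\<^bsub>M\<^esub> y"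
    using cd xy cdK by (simp add: M_smult M R.r_distr)
  show "(c \<otimes>\<^bsub>S\<^esub> d) \<odot>\<^bsub>M\<^esub> x = c \<odot>\<^bsub>M\<^esub> (d \<odot>\<^bsub>M\<^esub> x)"
    using cd xy cdK by (simp add: M_smult M, simp add: S_ops scal_mult R.m_assoc)
next
  interpret S: cring S by (rule S(1))
  fix x assume "x \<in> carrier M"
  then show "\<one>\<^bsub>S\<^esub> \<odot>\<^bsub>M\<^esub> x = x" by (simp add: M_smult M, simp add: S_ops scal_one)
qed

lemma cyclic_alg_nonassoc_algebra: "nonassoc_algebra K F cyclic_alg"
  unfolding nonassoc_algebra_def
proof (intro conjI ballI)
  have "cring (K\<lparr>carrier := F\<rparr>)"
    using K.subfield_iff(2)[OF subfield_F] by (simp add: field.axioms(1) domain.axioms(1))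
  then show "module (K\<lparr>carrier := F\<rparr>) cyclic_alg"
    by (rule module_scal) (auto simp: F_subset cyclic_alg_simps)
  fix x y z assume xyz: "x \<in> carrier cyclic_alg" "y \<in> carrier cyclic_alg" "z \<in> carrier cyclic_alg"
  then show "x \<otimes>\<^bsub>cyclic_alg\<^esub> y \<in> carrier cyclic_alg"
    by (simp add: cyclic_alg_simps mul_closed)
  show "x \<otimes>\<^bsub>cyclic_alg\<^esub> (y \<oplus>\<^bsub>cyclic_alg\<^esub> z) = x \<otimes>\<^bsub>cyclic_alg\<^esub> y \<oplus>\<^bsub>cyclic_alg\<^esub> x \<otimes>\<^bsub>cyclic_alg\<^esub> z"
    using xyz by (simp add: cyclic_alg_simps mul_add_right)
  show "(y \<oplus>\<^bsub>cyclic_alg\<^esub> z) \<otimes>\<^bsub>cyclic_alg\<^esub> x = y \<otimes>\<^bsub>cyclic_alg\<^esub> x \<oplus>\<^bsub>cyclic_alg\<^esub> z \<otimes>\<^bsub>cyclic_alg\<^esub> x"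
    using xyz by (simp add: cyclic_alg_simps mul_add_left)
next
  fix c x y assume cxy: "c \<in> F" "x \<in> carrier cyclic_alg" "y \<in> carrier cyclic_alg"
  then show "c \<odot>\<^bsub>cyclic_alg\<^esub> (x \<otimes>\<^bsub>cyclic_alg\<^esub> y) = (c \<odot>\<^bsub>cyclic_alg\<^esub> x) \<otimes>\<^bsub>cyclic_alg\<^esub> y"
    using F_subset by (auto simp: cyclic_alg_simps mul_scal_left)
  show "c \<odot>\<^bsub>cyclic_alg\<^esub> (x \<otimes>\<^bsub>cyclic_alg\<^esub> y) = x \<otimes>\<^bsub>cyclic_alg\<^esub> (c \<odot>\<^bsub>cyclic_alg\<^esub> y)"
    using cxy by (simp add: cyclic_alg_simps mul_scal_right)
next
  show "\<one>\<^bsub>cyclic_alg\<^esub> \<in> carrier cyclic_alg" by (simp add: cyclic_alg_simps)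
  fix x assume "x \<in> carrier cyclic_alg"
  then show "\<one>\<^bsub>cyclic_alg\<^esub> \<otimes>\<^bsub>cyclic_alg\<^esub> x = x" "x \<otimes>\<^bsub>cyclic_alg\<^esub> \<one>\<^bsub>cyclic_alg\<^esub> = x"
    by (simp_all add: cyclic_alg_simps mul_unit_vec0_left mul_unit_vec0_right)
qed

lemma embed_ring_hom: "embed \<in> ring_hom K cyclic_alg"
proof (rule ring_hom_memI)
  fix x y assume xy: "x \<in> carrier K" "y \<in> carrier K"
  then show "embed x \<in> carrier cyclic_alg" by (simp add: cyclic_alg_simps)
  show "embed (x \<otimes> y) = embed x \<otimes>\<^bsub>cyclic_alg\<^esub> embed y"
    using xy m_pos by (intro vec_eqI) (auto simp: cyclic_alg_simps mul_embed embed_apply mul_closed)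
  show "embed (x \<oplus> y) = embed x \<oplus>\<^bsub>cyclic_alg\<^esub> embed y"
    using xy by (intro vec_eqI) (auto simp: cyclic_alg_simps embed_apply)
next
  show "embed \<one> = \<one>\<^bsub>cyclic_alg\<^esub>" by (simp add: cyclic_alg_simps embed_def unit_vec_def)
qed

lemma embed_inj: "inj_on embed (carrier K)"
  using m_pos by (auto intro!: inj_onI simp: embed_def dest: fun_cong[of _ _ 0])

lemma embed_smult: "c \<in> F \<Longrightarrow> k \<in> carrier K \<Longrightarrow> embed (c \<otimes> k) = c \<odot>\<^bsub>cyclic_alg\<^esub> embed k"
  using F_subset by (intro vec_eqI) (auto simp: cyclic_alg_simps embed_apply)

lemma finsum_unit_vecs_apply:
  assumes "c \<in> carrier R" "n \<le> m" "j < m"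
  shows "(\<Oplus>\<^bsub>R\<^esub>i\<in>{..<n}. mul (embed (c i)) (unit_vec i)) j = (if j < n then c j else \<zero>)"
  using assms(2)
proof (induct n)
  case (Suc n)
  have "(\<Oplus>\<^bsub>R\<^esub>i\<in>{..<Suc n}. mul (embed (c i)) (unit_vec i)) =
      scal (c n) \<otimes>\<^bsub>R\<^esub> unit_vec n \<oplus>\<^bsub>R\<^esub> (\<Oplus>\<^bsub>R\<^esub>i\<in>{..<n}. mul (embed (c i)) (unit_vec i))"
    using Suc.prems assms(1) by (simp add: lessThan_Suc R.finsum_insert Pi_iff mul_closed mul_embed)
  then show ?case using Suc assms by (auto simp: unit_vec_apply less_Suc_eq)
qed (simp add: assms(3))

lemma cyclic_alg_free: "free_left_module_rank K embed cyclic_alg m"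
  unfolding free_left_module_rank_def
proof (intro conjI exI[of _ unit_vec] allI impI ballI)
  show "module K (cyclic_alg\<lparr>smult := \<lambda>d x. embed d \<otimes>\<^bsub>cyclic_alg\<^esub> x\<rparr>)"
    by (rule module_scal) (auto simp: K.cring_axioms cyclic_alg_simps cyclic_alg_def mul_embed)
  fix i show "unit_vec i \<in> carrier cyclic_alg" by (simp add: cyclic_alg_simps)
next
  fix x assume "x \<in> carrier cyclic_alg"
  then have x: "x \<in> carrier R" "x \<in> {..<m} \<rightarrow>\<^sub>E carrier K" by (simp_all add: cyclic_alg_simps vec_ring_simps)
  have expand: "finsum cyclic_alg (\<lambda>i. embed (c i) \<otimes>\<^bsub>cyclic_alg\<^esub> unit_vec i) {..<m} = c"
    if "c \<in> carrier R" for c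
  proof -
    have "(\<Oplus>\<^bsub>R\<^esub>i\<in>{..<m}. mul (embed (c i)) (unit_vec i)) \<in> carrier R"
      using that by (intro R.finsum_closed) (auto simp: mul_closed)
    then show ?thesis
      using that by (intro vec_eqI) (auto simp: cyclic_alg_simps finsum_cyclic_alg finsum_unit_vecs_apply)
  qed
  show "\<exists>!c. c \<in> {..<m} \<rightarrow>\<^sub>E carrier K \<and>
      x = finsum cyclic_alg (\<lambda>i. embed (c i) \<otimes>\<^bsub>cyclic_alg\<^esub> unit_vec i) {..<m}"
    using x expand by (intro ex1I[of _ x]) (auto simp: vec_ring_simps)
qed

end

section \<open>The automorphism \<open>t \<mapsto> \<omega> t\<close>\<close>

locale nonassoc_cyclic_algebra_root = nonassoc_cyclic_algebra +
  fixes \<omega> :: 'a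
  assumes \<omega>_in_F: "\<omega> \<in> F"
    and \<omega>_primitive: "primitive_root_of_unity K m \<omega>"
begin

definition omega_aut :: "(nat \<Rightarrow> 'a) \<Rightarrow> nat \<Rightarrow> 'a" where
  "omega_aut = (\<lambda>x\<in>carrier R. \<lambda>i\<in>{..<m}. \<omega> [^] i \<otimes> x i)"

lemma \<omega>_closed [simp]: "\<omega> \<in> carrier K"
  using \<omega>_in_F F_subset by auto

lemma \<omega>_pow_m: "\<omega> [^] m = \<one>"
  using \<omega>_primitive by (simp add: primitive_root_of_unity_def)

lemma \<sigma>_fixes_\<omega>_pow [simp]: "\<sigma> (\<omega> [^] (n :: nat)) = \<omega> [^] n"
proof -
  have "\<omega> [^] n \<in> F"
    using subfieldE(1)[OF subfield_F] \<omega>_in_F by (induct n) (auto intro: subringE(3,6))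
  then show ?thesis by (rule \<sigma>_fixes_F)
qed

lemma omega_aut_apply: "x \<in> carrier R \<Longrightarrow> i < m \<Longrightarrow> omega_aut x i = \<omega> [^] i \<otimes> x i"
  by (simp add: omega_aut_def)

lemma omega_aut_closed [simp]: "x \<in> carrier R \<Longrightarrow> omega_aut x \<in> carrier R"
  by (auto simp: omega_aut_def vec_ring_simps)

lemma omega_aut_add:
  "x \<in> carrier R \<Longrightarrow> y \<in> carrier R \<Longrightarrow> omega_aut (x \<oplus>\<^bsub>R\<^esub> y) = omega_aut x \<oplus>\<^bsub>R\<^esub> omega_aut y"
  by (intro vec_eqI) (auto simp: omega_aut_apply K.r_distr)

lemma omega_aut_scal:
  "k \<in> carrier K \<Longrightarrow> x \<in> carrier R \<Longrightarrow> omega_aut (scal k \<otimes>\<^bsub>R\<^esub> x) = scal k \<otimes>\<^bsub>R\<^esub> omega_aut x"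
  by (intro vec_eqI) (auto simp: omega_aut_apply K.m_lcomm)

lemma omega_aut_tmul:
  assumes "y \<in> carrier R"
  shows "omega_aut (tmul y) = scal \<omega> \<otimes>\<^bsub>R\<^esub> tmul (omega_aut y)"
proof (rule vec_eqI)
  fix i assume i: "i < m"
  define j where "j = (if i = 0 then m - 1 else i - 1)"
  have "\<omega> \<otimes> \<omega> [^] j = \<omega> [^] Suc j" by (rule K.nat_pow_Suc2[OF \<omega>_closed, symmetric])
  also have "Suc j = (if i = 0 then m else i)" using m_pos by (simp add: j_def)
  also have "\<omega> [^] (if i = 0 then m else i) = \<omega> [^] i" using \<omega>_pow_m by simp
  finally have "\<omega> \<otimes> \<omega> [^] j = \<omega> [^] i" .
  moreover have "j < m" using i m_pos by (auto simp: j_def)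
  ultimately have j: "j < m" "\<omega> \<otimes> \<omega> [^] j = \<omega> [^] i" by simp_all
  define c where "c = (if i = 0 then a else \<one>)"
  have c: "c \<in> carrier K" "tmul z i = c \<otimes> \<sigma> (z j)" if "z \<in> carrier R" for z
    using i a_closed that by (auto simp: c_def j_def tmul_apply)
  have "(scal \<omega> \<otimes>\<^bsub>R\<^esub> tmul (omega_aut y)) i = \<omega> \<otimes> (c \<otimes> (\<omega> [^] j \<otimes> \<sigma> (y j)))"
    using i j(1) c assms by (simp add: omega_aut_apply)
  also have "\<dots> = (\<omega> \<otimes> \<omega> [^] j) \<otimes> (c \<otimes> \<sigma> (y j))"
    using j(1) c(1) assms by (simp add: K.m_ac)
  also have "\<dots> = omega_aut (tmul y) i"
    using i j c assms by (simp add: omega_aut_apply)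
  finally show "omega_aut (tmul y) i = (scal \<omega> \<otimes>\<^bsub>R\<^esub> tmul (omega_aut y)) i" by simp
qed (use assms in simp_all)

lemma omega_aut_tmul_pow:
  "y \<in> carrier R \<Longrightarrow> omega_aut ((tmul ^^ n) y) = scal (\<omega> [^] n) \<otimes>\<^bsub>R\<^esub> (tmul ^^ n) (omega_aut y)"
proof (induct n)
  case 0
  then show ?case by (simp add: scal_one)
next
  case (Suc n)
  have "omega_aut ((tmul ^^ Suc n) y) = scal \<omega> \<otimes>\<^bsub>R\<^esub> tmul (omega_aut ((tmul ^^ n) y))"
    using Suc.prems by (simp add: omega_aut_tmul)
  also have "\<dots> = scal \<omega> \<otimes>\<^bsub>R\<^esub> (scal (\<omega> [^] n) \<otimes>\<^bsub>R\<^esub> (tmul ^^ Suc n) (omega_aut y))"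
    using Suc by (simp add: tmul_scal)
  also have "\<dots> = scal (\<omega> \<otimes> \<omega> [^] n) \<otimes>\<^bsub>R\<^esub> (tmul ^^ Suc n) (omega_aut y)"
    using Suc.prems by (simp add: scal_mult R.m_assoc del: funpow.simps)
  also have "\<omega> \<otimes> \<omega> [^] n = \<omega> [^] Suc n" by (rule K.nat_pow_Suc2[OF \<omega>_closed, symmetric])
  finally show ?case .
qed

lemma omega_aut_combine:
  "x \<in> carrier R \<Longrightarrow> y \<in> carrier R \<Longrightarrow> n \<le> m \<Longrightarrow>
     omega_aut (R.combine (coeffs x n) (tpowers y n)) =
     R.combine (coeffs (omega_aut x) n) (tpowers (omega_aut y) n)"
proof (induct n)
  case 0
  then show ?case by (intro vec_eqI) (simp_all add: omega_aut_apply)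
next
  case (Suc n)
  then have "R.combine (coeffs x n) (tpowers y n) \<in> carrier R"
    using set_coeffs_carrier set_tpowers by (intro R.combine_in_carrier) auto
  moreover have "scal (x n) \<otimes>\<^bsub>R\<^esub> scal (\<omega> [^] n) = scal (omega_aut x n)"
    using Suc.prems by (simp add: omega_aut_apply K.m_comm flip: scal_mult)
  ultimately show ?case
    using Suc by (simp add: omega_aut_add omega_aut_scal omega_aut_tmul_pow R.m_assoc[symmetric])
qed

lemma omega_aut_mul:
  "x \<in> carrier R \<Longrightarrow> y \<in> carrier R \<Longrightarrow> omega_aut (mul x y) = mul (omega_aut x) (omega_aut y)"
  by (simp add: mul_def omega_aut_combine)

lemma omega_aut_pow_closed [simp]: "x \<in> carrier R \<Longrightarrow> (omega_aut ^^ n) x \<in> carrier R"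
  by (induct n) auto

lemma omega_aut_pow_apply:
  "x \<in> carrier R \<Longrightarrow> i < m \<Longrightarrow> (omega_aut ^^ n) x i = \<omega> [^] (i * n) \<otimes> x i"
  by (induct n) (auto simp: omega_aut_apply K.nat_pow_mult K.m_assoc[symmetric])

lemma omega_aut_pow_m: "x \<in> carrier R \<Longrightarrow> (omega_aut ^^ m) x = x"
proof -
  have "\<omega> [^] (i * m) = \<one>" for i
    using \<omega>_pow_m K.nat_pow_pow[OF \<omega>_closed, of m i] by (simp add: mult.commute)
  then show "x \<in> carrier R \<Longrightarrow> ?thesis"
    by (intro vec_eqI) (simp_all add: omega_aut_pow_apply)
qed

lemma omega_aut_bij: "bij_betw omega_aut (carrier R) (carrier R)"
proof (rule bij_betwI[where g = "omega_aut ^^ (m - 1)"])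
  have m: "Suc (m - 1) = m" using m_pos by simp
  fix x assume x: "x \<in> carrier R"
  have "(omega_aut ^^ (m - 1)) (omega_aut x) = (omega_aut ^^ Suc (m - 1)) x"
    by (simp only: funpow_Suc_right comp_apply)
  then show "(omega_aut ^^ (m - 1)) (omega_aut x) = x" using omega_aut_pow_m[OF x] m by simp
  have "omega_aut ((omega_aut ^^ (m - 1)) x) = (omega_aut ^^ Suc (m - 1)) x"
    by (simp only: funpow.simps(2) comp_apply)
  then show "omega_aut ((omega_aut ^^ (m - 1)) x) = x" using omega_aut_pow_m[OF x] m by simp
qed auto

lemma omega_aut_Aut: "omega_aut \<in> Aut F cyclic_alg"
  unfolding Aut_def
proof (intro CollectI conjI ballI)
  show "bij_betw omega_aut (carrier cyclic_alg) (carrier cyclic_alg)"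
    using omega_aut_bij by (simp add: cyclic_alg_simps)
  show "omega_aut \<in> extensional (carrier cyclic_alg)"
    by (simp add: omega_aut_def cyclic_alg_simps)
  fix x y assume "x \<in> carrier cyclic_alg" "y \<in> carrier cyclic_alg"
  then show "omega_aut (x \<oplus>\<^bsub>cyclic_alg\<^esub> y) = omega_aut x \<oplus>\<^bsub>cyclic_alg\<^esub> omega_aut y"
    "omega_aut (x \<otimes>\<^bsub>cyclic_alg\<^esub> y) = omega_aut x \<otimes>\<^bsub>cyclic_alg\<^esub> omega_aut y"
    by (simp_all add: cyclic_alg_simps omega_aut_add omega_aut_mul)
next
  fix c x assume "c \<in> F" "x \<in> carrier cyclic_alg"
  then show "omega_aut (c \<odot>\<^bsub>cyclic_alg\<^esub> x) = c \<odot>\<^bsub>cyclic_alg\<^esub> omega_aut x"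
    using F_subset by (auto simp: cyclic_alg_simps omega_aut_scal)
qed

lemma omega_aut_iterates_fix_embed:
  assumes "H \<in> {restrict (omega_aut ^^ i) (carrier cyclic_alg) | i. True}" "k \<in> carrier K"
  shows "H (embed k) = embed k"
proof -
  obtain n where "H = restrict (omega_aut ^^ n) (carrier R)"
    using assms(1) by (auto simp: cyclic_alg_simps)
  then have "H (embed k) = (omega_aut ^^ n) (embed k)" using assms(2) by simp
  also have "\<dots> = embed k"
    using assms(2) by (intro vec_eqI) (auto simp: omega_aut_pow_apply embed_apply)
  finally show ?thesis .
qed

lemma card_omega_aut_iterates: "card {restrict (omega_aut ^^ i) (carrier cyclic_alg) | i. True} = m"
proof -
  define g where "g i = restrict (omega_aut ^^ i) (carrier R)" for i
  have "g i = g (i mod m)" for i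
    unfolding g_def by (rule restrict_ext) (simp add: funpow_mod_eq omega_aut_pow_m)
  then have "g i \<in> g ` {..<m}" for i
    using m_pos by (metis rev_image_eqI lessThan_iff mod_less_divisor)
  then have "{restrict (omega_aut ^^ i) (carrier cyclic_alg) | i. True} = g ` {..<m}"
    unfolding cyclic_alg_simps by (auto simp: g_def)
  moreover have "inj_on g {..<m}"
  proof (rule inj_onI)
    fix n n' assume nn': "n \<in> {..<m}" "n' \<in> {..<m}" "g n = g n'"
    show "n = n'"
    proof (cases "m = 1")
      case False
      then have "1 < m" using m_pos by simp
      then have "g k (unit_vec 1) 1 = \<omega> [^] k" for k
        by (simp add: g_def omega_aut_pow_apply unit_vec_apply)
      then have "\<omega> [^] n = \<omega> [^] n'" using nn'(3) by metis
      then show ?thesis using K.primitive_root_pow_inj[OF \<omega>_primitive] nn'(1,2) by (auto dest: inj_onD)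
    qed (use nn' in simp)
  qed
  ultimately show ?thesis by (simp add: card_image)
qed

end

section \<open>\<open>K\<^sup>m\<close> as a vector space over \<open>K\<close>\<close>

context nonassoc_cyclic_algebra
begin

abbreviation Kc :: "(nat \<Rightarrow> 'a) set" where "Kc \<equiv> scal ` carrier K"

declare R.Span.simps [simp del]

lemma scal_ring_hom_ring: "ring_hom_ring K R scal"
  by (rule ring_hom_ringI2) (simp_all add: K.ring_axioms R.ring_axioms scal_hom)

lemma R_one_nonzero: "\<one>\<^bsub>R\<^esub> \<noteq> \<zero>\<^bsub>R\<^esub>"
  using m_pos by (auto simp: vec_ring_simps dest: fun_cong[of _ _ 0])

lemma subfield_Kc: "subfield Kc R"
  using ring_hom_ring.img_is_subfield(2)[OF scal_ring_hom_ring K.carrier_is_subfield R_one_nonzero] .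

lemma subfield_Fc: "subfield (scal ` F) R"
  using ring_hom_ring.img_is_subfield(2)[OF scal_ring_hom_ring subfield_F R_one_nonzero] .

lemma Span_Kc_scal_cancel:
  "set Us \<subseteq> carrier R \<Longrightarrow> c \<in> carrier K \<Longrightarrow> c \<noteq> \<zero> \<Longrightarrow> v \<in> carrier R \<Longrightarrow>
     scal c \<otimes>\<^bsub>R\<^esub> v \<in> R.Span Kc Us \<Longrightarrow> v \<in> R.Span Kc Us"
proof -
  assume "set Us \<subseteq> carrier R" "c \<in> carrier K" "c \<noteq> \<zero>" "v \<in> carrier R"
    "scal c \<otimes>\<^bsub>R\<^esub> v \<in> R.Span Kc Us"
  moreover have "scal c \<noteq> \<zero>\<^bsub>R\<^esub>"
    using \<open>c \<in> carrier K\<close> \<open>c \<noteq> \<zero>\<close> scal_inj scal_zero by (metis K.zero_closed inj_onD)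
  ultimately show ?thesis using R.Span_m_inv_simprule[OF subfield_Kc] by blast
qed

lemma combine_unit_vecs_apply_high:
  "set Ks \<subseteq> carrier R \<Longrightarrow> n \<le> j \<Longrightarrow> j < m \<Longrightarrow> R.combine Ks (unit_vecs n) j = \<zero>"
proof (induct n arbitrary: Ks)
  case (Suc n)
  then show ?case by (cases Ks) (auto simp: unit_vec_apply)
qed simp

lemma unit_vecs_independent: "n \<le> m \<Longrightarrow> R.independent Kc (unit_vecs n)"
proof (induct n)
  case (Suc n)
  have "unit_vec n \<notin> R.Span Kc (unit_vecs n)"
  proof
    assume "unit_vec n \<in> R.Span Kc (unit_vecs n)"
    then obtain Ks where "set Ks \<subseteq> Kc" "unit_vec n = R.combine Ks (unit_vecs n)"
      using R.Span_eq_combine_set[OF subfield_Kc set_unit_vecs] by blast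
    then have "unit_vec n n = \<zero>" using Suc.prems by (auto intro!: combine_unit_vecs_apply_high)
    then show False using Suc.prems by (simp add: unit_vec_apply)
  qed
  then show ?case using Suc by (auto intro: R.li_Cons)
qed simp

lemma Span_unit_vecs: "R.Span Kc (unit_vecs m) = carrier R"
proof
  show "R.Span Kc (unit_vecs m) \<subseteq> carrier R"
    using R.Span_subgroup_props(1)[OF subfield_Kc set_unit_vecs] .
  show "carrier R \<subseteq> R.Span Kc (unit_vecs m)"
  proof
    fix x assume "x \<in> carrier R"
    then have "x = R.combine (coeffs x m) (unit_vecs m)" "set (coeffs x m) \<subseteq> Kc"
      by (simp_all add: combine_coeffs_unit_vecs set_coeffs)
    then show "x \<in> R.Span Kc (unit_vecs m)"
      using R.Span_eq_combine_set[OF subfield_Kc set_unit_vecs] by blast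
  qed
qed

lemma dimension_Kc: "R.dimension m Kc (carrier R)"
  using R.dimension_independent[OF unit_vecs_independent[of m]] Span_unit_vecs by simp

lemma tmul_Span:
  assumes "set Us \<subseteq> carrier R"
  shows "tmul ` R.Span Kc Us \<subseteq> R.Span Kc (map tmul Us)"
  using assms
proof (induct Us)
  case Nil
  then show ?case by (simp add: R.Span.simps tmul_zero)
next
  case (Cons u Us)
  show ?case
  proof
    fix y assume "y \<in> tmul ` R.Span Kc (u # Us)"
    then obtain c x where cx: "c \<in> carrier K" "x \<in> R.Span Kc Us" "y = tmul (scal c \<otimes>\<^bsub>R\<^esub> u \<oplus>\<^bsub>R\<^esub> x)"
      by (auto simp: R.Span.simps R.line_extension_mem_iff)
    have "x \<in> carrier R"
      using cx(2) R.Span_subgroup_props(1)[OF subfield_Kc] Cons.prems by auto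
    then have "y = scal (\<sigma> c) \<otimes>\<^bsub>R\<^esub> tmul u \<oplus>\<^bsub>R\<^esub> tmul x"
      using cx Cons.prems by (simp add: tmul_add tmul_scal)
    moreover have "tmul x \<in> R.Span Kc (map tmul Us)" using Cons cx(2) by auto
    ultimately show "y \<in> R.Span Kc (map tmul (u # Us))"
      using cx(1) by (auto simp: R.Span.simps R.line_extension_mem_iff)
  qed
qed

lemma tpowers_Span_invariant:
  assumes "v \<in> carrier R" "(tmul ^^ n) v \<in> R.Span Kc (tpowers v n)"
  shows "tmul ` R.Span Kc (tpowers v n) \<subseteq> R.Span Kc (tpowers v n)"
proof -
  let ?U = "R.Span Kc (tpowers v n)"
  have base: "set (tpowers v n) \<subseteq> ?U"
    using R.Span_base_incl[OF subfield_Kc set_tpowers[OF assms(1)]] .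
  have "set (map tmul (tpowers v n)) \<subseteq> ?U"
  proof
    fix u assume "u \<in> set (map tmul (tpowers v n))"
    then obtain k where k: "k < n" "u = (tmul ^^ Suc k) v" by (auto simp: set_tpowers_eq)
    show "u \<in> ?U"
    proof (cases "Suc k = n")
      case False
      have "u \<in> set (tpowers v n)"
        unfolding set_tpowers_eq by (rule rev_image_eqI[of "Suc k"]) (use k False in auto)
      then show ?thesis using base by blast
    qed (use assms(2) k in simp)
  qed
  then have "R.Span Kc (map tmul (tpowers v n)) \<subseteq> ?U"
    by (rule R.mono_Span_subset[OF subfield_Kc _ set_tpowers[OF assms(1)]])
  then show ?thesis by (rule order_trans[OF tmul_Span[OF set_tpowers[OF assms(1)]]])
qed

end

section \<open>Division\<close>

locale nonassoc_cyclic_division = nonassoc_cyclic_algebra +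
  assumes m_prime: "Factorial_Ring.prime m"
    and \<sigma>_period: "\<And>x. x \<in> carrier K \<Longrightarrow> (\<sigma> ^^ m) x = x"
    and \<sigma>_moves_a: "\<sigma> a \<noteq> a"
    and dimension_F: "K.dimension m F (carrier K)"
begin

lemma \<sigma>_inj: "inj_on \<sigma> (carrier K)"
proof (rule inj_onI)
  fix x y assume "x \<in> carrier K" "y \<in> carrier K" "\<sigma> x = \<sigma> y"
  then have "(\<sigma> ^^ (m - 1)) (\<sigma> x) = (\<sigma> ^^ (m - 1)) (\<sigma> y)" by simp
  then have "(\<sigma> ^^ Suc (m - 1)) x = (\<sigma> ^^ Suc (m - 1)) y"
    by (simp only: funpow_Suc_right comp_apply)
  then show "x = y" using m_pos \<sigma>_period \<open>x \<in> carrier K\<close> \<open>y \<in> carrier K\<close> by simp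
qed

lemma a_orbit_inj: "inj_on (\<lambda>i. (\<sigma> ^^ i) a) {..<m}"
  by (rule inj_on_prime_orbit[OF \<sigma>_inj _ a_closed m_prime \<sigma>_period[OF a_closed] \<sigma>_moves_a]) auto

lemma a_nonzero: "a \<noteq> \<zero>"
  using \<sigma>_moves_a by auto

lemma tmul_pow_m_apply: "w \<in> carrier R \<Longrightarrow> i < m \<Longrightarrow> (tmul ^^ m) w i = (\<sigma> ^^ i) a \<otimes> w i"
  using \<sigma>_period by (simp add: tmul_pow_apply)

lemma invariant_Span_shrink_support:
  assumes Us: "set Us \<subseteq> carrier R" and inv: "tmul ` R.Span Kc Us \<subseteq> R.Span Kc Us"
    and w: "w \<in> R.Span Kc Us" and ij: "i < m" "j < m" "i \<noteq> j" "w i \<noteq> \<zero>" "w j \<noteq> \<zero>"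
  obtains w' where "w' \<in> R.Span Kc Us" "w' \<noteq> \<zero>\<^bsub>R\<^esub>"
    "card {k. k < m \<and> w' k \<noteq> \<zero>} < card {k. k < m \<and> w k \<noteq> \<zero>}"
proof -
  let ?U = "R.Span Kc Us"
  have wR: "w \<in> carrier R" using w R.Span_subgroup_props(1)[OF subfield_Kc Us] by blast
  txt \<open>\<open>t\<^sup>m\<close> is diagonal with the distinct entries \<open>\<sigma>\<^sup>k(a)\<close>, so \<open>w'\<close> loses the coordinate \<open>j\<close>
    of \<open>w\<close> but keeps the coordinate \<open>i\<close>.\<close>
  define w' where "w' = (tmul ^^ m) w \<ominus>\<^bsub>R\<^esub> scal ((\<sigma> ^^ j) a) \<otimes>\<^bsub>R\<^esub> w"
  have "tmul v \<in> ?U" if "v \<in> ?U" for v using inv that by blast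
  then have "(tmul ^^ n) v \<in> ?U" if "v \<in> ?U" for n v using that by (induct n) simp_all
  moreover have "scal ((\<sigma> ^^ j) a) \<otimes>\<^bsub>R\<^esub> w \<in> ?U"
    using w a_closed by (simp add: R.Span_smult_closed[OF subfield_Kc Us])
  ultimately have "w' \<in> ?U"
    using w R.Span_subgroup_props(3,4)[OF subfield_Kc Us] by (simp add: w'_def a_minus_def)
  have w'_apply: "w' k = ((\<sigma> ^^ k) a \<ominus> (\<sigma> ^^ j) a) \<otimes> w k" if "k < m" for k
    using that wR a_closed by (simp add: w'_def tmul_pow_m_apply K.l_minus K.minus_eq K.l_distr)
  have "(\<sigma> ^^ i) a \<noteq> (\<sigma> ^^ j) a" using a_orbit_inj ij(1-3) by (auto dest: inj_onD)
  then have "(\<sigma> ^^ i) a \<ominus> (\<sigma> ^^ j) a \<noteq> \<zero>" using a_closed by (simp add: K.r_right_minus_eq)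
  then have "w' i \<noteq> \<zero>" using ij(1,4) wR a_closed by (simp add: w'_apply K.integral_iff)
  then have "w' \<noteq> \<zero>\<^bsub>R\<^esub>" using ij(1) by (intro notI) simp
  moreover have "{k. k < m \<and> w' k \<noteq> \<zero>} \<subseteq> {k. k < m \<and> w k \<noteq> \<zero>} - {j}"
  proof
    fix k assume "k \<in> {k. k < m \<and> w' k \<noteq> \<zero>}"
    then have k: "k < m" "w' k \<noteq> \<zero>" by auto
    then have "w k \<noteq> \<zero>" using a_closed by (auto simp: w'_apply)
    moreover have "k \<noteq> j" using k a_closed wR by (auto simp: w'_apply K.minus_eq K.r_neg)
    ultimately show "k \<in> {k. k < m \<and> w k \<noteq> \<zero>} - {j}" using k by simp
  qed
  then have "card {k. k < m \<and> w' k \<noteq> \<zero>} < card {k. k < m \<and> w k \<noteq> \<zero>}"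
    using ij(2,5) by (intro psubset_card_mono) auto
  ultimately show thesis using that \<open>w' \<in> ?U\<close> by blast
qed

lemma invariant_Span_has_unit_vec:
  assumes Us: "set Us \<subseteq> carrier R" and inv: "tmul ` R.Span Kc Us \<subseteq> R.Span Kc Us"
    and "w \<in> R.Span Kc Us" "w \<noteq> \<zero>\<^bsub>R\<^esub>"
  shows "\<exists>j<m. unit_vec j \<in> R.Span Kc Us"
  using assms(3,4)
proof (induct "card {i. i < m \<and> w i \<noteq> \<zero>}" arbitrary: w rule: less_induct)
  case less
  have w: "w \<in> carrier R" using less.prems(1) R.Span_subgroup_props(1)[OF subfield_Kc Us] by blast
  have "\<exists>j<m. w j \<noteq> \<zero>"
  proof (rule ccontr)
    assume "\<not> (\<exists>j<m. w j \<noteq> \<zero>)"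
    then have "w = \<zero>\<^bsub>R\<^esub>" using w by (intro vec_eqI) auto
    then show False using less.prems(2) by contradiction
  qed
  then obtain j where j: "j < m" "w j \<noteq> \<zero>" by blast
  show ?case
  proof (cases "\<forall>i<m. i \<noteq> j \<longrightarrow> w i = \<zero>")
    case True
    then have "w = scal (w j) \<otimes>\<^bsub>R\<^esub> unit_vec j"
      using w j by (intro vec_eqI) (auto simp: unit_vec_apply)
    then have "unit_vec j \<in> R.Span Kc Us"
      using Span_Kc_scal_cancel[OF Us _ j(2)] less.prems(1) w j(1) by simp
    then show ?thesis using j(1) by blast
  next
    case False
    then obtain i where "i < m" "i \<noteq> j" "w i \<noteq> \<zero>" by blast
    then obtain w' where "w' \<in> R.Span Kc Us" "w' \<noteq> \<zero>\<^bsub>R\<^esub>"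
      "card {k. k < m \<and> w' k \<noteq> \<zero>} < card {k. k < m \<and> w k \<noteq> \<zero>}"
      using invariant_Span_shrink_support[OF Us inv less.prems(1) _ j(1) _ _ j(2)] by blast
    then show ?thesis using less.hyps by blast
  qed
qed

lemma dimension_Fc: "R.dimension (m * m) (scal ` F) (carrier R)"
proof -
  have "R.dimension m (scal ` F) Kc"
    using ring_hom_ring.inj_hom_dimension[OF scal_ring_hom_ring subfield_F R_one_nonzero scal_inj dimension_F] .
  then show ?thesis using R.telescopic_base[OF subfield_Fc subfield_Kc _ dimension_Kc] by blast
qed

lemma invariant_Span_eq_carrier:
  assumes Us: "set Us \<subseteq> carrier R" and inv: "tmul ` R.Span Kc Us \<subseteq> R.Span Kc Us"
    and "w \<in> R.Span Kc Us" "w \<noteq> \<zero>\<^bsub>R\<^esub>"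
  shows "R.Span Kc Us = carrier R"
proof -
  let ?U = "R.Span Kc Us"
  have step: "unit_vec (Suc i mod m) \<in> ?U" if "i < m" "unit_vec i \<in> ?U" for i
  proof -
    define c where "c = (if Suc i = m then a else \<one>)"
    have c: "c \<in> carrier K" "c \<noteq> \<zero>" using a_closed a_nonzero by (auto simp: c_def)
    have "tmul (unit_vec i) = scal c \<otimes>\<^bsub>R\<^esub> unit_vec (Suc i mod m)"
    proof (rule vec_eqI)
      fix k assume k: "k < m"
      show "tmul (unit_vec i) k = (scal c \<otimes>\<^bsub>R\<^esub> unit_vec (Suc i mod m)) k"
      proof (cases "Suc i = m")
        case True
        then show ?thesis using k a_closed
          by (auto simp: tmul_apply unit_vec_apply c_def)
      next
        case False
        then have "Suc i mod m = Suc i" using that(1) by simp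
        then show ?thesis using k False a_closed
          by (auto simp: tmul_apply unit_vec_apply c_def)
      qed
    qed (simp_all add: c(1))
    then show ?thesis
      using Span_Kc_scal_cancel[OF Us c] inv that(2) by auto
  qed
  obtain j where j: "j < m" "unit_vec j \<in> ?U"
    using invariant_Span_has_unit_vec[OF assms] by blast
  have "unit_vec ((j + k) mod m) \<in> ?U" for k
  proof (induct k)
    case (Suc k)
    then show ?case using step[of "(j + k) mod m"] m_pos by (simp add: mod_Suc_eq)
  qed (use j in simp)
  moreover have "(j + (m - j + i)) mod m = i" if "i < m" for i
    using that j(1) by simp
  ultimately have "unit_vec i \<in> ?U" if "i < m" for i
    using that by metis
  then have "R.Span Kc (unit_vecs m) \<subseteq> ?U"
    by (intro R.mono_Span_subset[OF subfield_Kc _ Us]) (auto simp: set_unit_vecs_eq)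
  then show ?thesis using Span_unit_vecs R.Span_subgroup_props(1)[OF subfield_Kc Us] by blast
qed

lemma tpowers_independent:
  assumes v: "v \<in> carrier R" "v \<noteq> \<zero>\<^bsub>R\<^esub>"
  shows "n \<le> m \<Longrightarrow> R.independent Kc (tpowers v n)"
proof (induct n)
  case (Suc n)
  let ?U = "R.Span Kc (tpowers v n)"
  txt \<open>Otherwise \<open>?U\<close> would be a \<open>t\<close>-invariant subspace of dimension \<open>n < m\<close> containing \<open>v\<close>.\<close>
  have "(tmul ^^ n) v \<notin> ?U"
  proof
    assume in_U: "(tmul ^^ n) v \<in> ?U"
    have "n \<noteq> 0"
    proof
      assume "n = 0"
      then show False using in_U v by (simp add: R.Span.simps)
    qed
    then have "v \<in> set (tpowers v n)" unfolding set_tpowers_eq by (intro rev_image_eqI[of 0]) simp_all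
    then have "v \<in> ?U" using R.Span_base_incl[OF subfield_Kc set_tpowers[OF v(1)]] by blast
    moreover have "tmul ` ?U \<subseteq> ?U" using tpowers_Span_invariant[OF v(1) in_U] .
    ultimately have "?U = carrier R"
      using invariant_Span_eq_carrier[OF set_tpowers[OF v(1)] _ _ v(2)] by blast
    then have "R.dimension n Kc (carrier R)"
      using R.dimension_independent[OF Suc.hyps] Suc.prems by simp
    then have "n = m" by (rule R.dimension_is_inj[OF subfield_Kc _ dimension_Kc])
    then show False using Suc.prems by simp
  qed
  then show ?case using Suc v(1) by (auto intro: R.li_Cons)
qed simp

lemma mul_eq_zero_imp_left_zero:
  assumes "x \<in> carrier R" "y \<in> carrier R" "y \<noteq> \<zero>\<^bsub>R\<^esub>" "mul x y = \<zero>\<^bsub>R\<^esub>"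
  shows "x = \<zero>\<^bsub>R\<^esub>"
proof (rule vec_eqI)
  have "set (coeffs x m) \<subseteq> {\<zero>\<^bsub>R\<^esub>}"
    using R.independent_imp_trivial_combine[OF subfield_Kc tpowers_independent[OF assms(2,3) order.refl]
        set_coeffs[OF assms(1) order.refl]] assms(4)
    by (simp add: mul_def)
  then have eq: "scal (x i) = scal \<zero>" if "i < m" for i
    using that by (auto simp: set_coeffs_eq scal_zero)
  show "x i = \<zero>\<^bsub>R\<^esub> i" if "i < m" for i
    using inj_onD[OF scal_inj eq[OF that]] assms(1) that by simp
qed (use assms in simp_all)

text \<open>Left multiplication is only \<open>F\<close>-linear, so here the \<open>F\<close>-dimension \<open>m * m\<close> of \<open>K\<^sup>m\<close> is used.\<close>
lemma mul_left_bij: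
  assumes "u \<in> carrier R" "u \<noteq> \<zero>\<^bsub>R\<^esub>"
  shows "bij_betw (mul u) (carrier R) (carrier R)"
proof (rule R.linear_trivial_kernel_imp_bij[OF subfield_Fc dimension_Fc])
  show "\<And>x. x \<in> carrier R \<Longrightarrow> mul u x = \<zero>\<^bsub>R\<^esub> \<Longrightarrow> x = \<zero>\<^bsub>R\<^esub>"
    using mul_eq_zero_imp_left_zero assms by blast
qed (use assms in \<open>auto simp: mul_closed mul_add_right mul_scal_right\<close>)

lemma mul_right_bij:
  assumes "v \<in> carrier R" "v \<noteq> \<zero>\<^bsub>R\<^esub>"
  shows "bij_betw (\<lambda>x. mul x v) (carrier R) (carrier R)"
proof (rule R.linear_trivial_kernel_imp_bij[OF subfield_Kc dimension_Kc])
  show "\<And>x. x \<in> carrier R \<Longrightarrow> mul x v = \<zero>\<^bsub>R\<^esub> \<Longrightarrow> x = \<zero>\<^bsub>R\<^esub>"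
    using mul_eq_zero_imp_left_zero assms by blast
qed (use assms in \<open>auto simp: mul_closed mul_add_left mul_scal_left\<close>)

lemma cyclic_alg_division: "nonassoc_division_algebra K F cyclic_alg"
  unfolding nonassoc_division_algebra_def
proof (intro conjI ballI impI)
  show "nonassoc_algebra K F cyclic_alg" by (rule cyclic_alg_nonassoc_algebra)
  show "carrier cyclic_alg \<noteq> {\<zero>\<^bsub>cyclic_alg\<^esub>}"
  proof
    assume "carrier cyclic_alg = {\<zero>\<^bsub>cyclic_alg\<^esub>}"
    then have "unit_vec 0 = \<zero>\<^bsub>R\<^esub>" using unit_vec_closed[of 0] by (simp add: cyclic_alg_simps)
    then show False using unit_vec_nonzero[OF m_pos] by contradiction
  qed
  fix u assume "u \<in> carrier cyclic_alg" "u \<noteq> \<zero>\<^bsub>cyclic_alg\<^esub>"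
  then have u: "u \<in> carrier R" "u \<noteq> \<zero>\<^bsub>R\<^esub>" by (simp_all add: cyclic_alg_simps)
  show "bij_betw (\<lambda>x. u \<otimes>\<^bsub>cyclic_alg\<^esub> x) (carrier cyclic_alg) (carrier cyclic_alg)"
    using mul_left_bij[OF u] by (simp add: cyclic_alg_simps)
  show "bij_betw (\<lambda>x. x \<otimes>\<^bsub>cyclic_alg\<^esub> u) (carrier cyclic_alg) (carrier cyclic_alg)"
    using mul_right_bij[OF u] by (simp add: cyclic_alg_simps)
qed

end

locale nonassoc_cyclic_construction = nonassoc_cyclic_division + nonassoc_cyclic_algebra_root
begin

lemma cyclic_alg_nonassoc_cyclic_extension: "nonassoc_cyclic_extension K F cyclic_alg embed m"
  unfolding nonassoc_cyclic_extension_def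
  by (intro conjI ballI bexI[of _ omega_aut] cyclic_alg_division embed_ring_hom embed_inj
      embed_smult cyclic_alg_free omega_aut_Aut card_omega_aut_iterates omega_aut_iterates_fix_embed)

end

lemma cyclic_galois_ext_generator:
  assumes "cyclic_galois_ext K F m" "2 \<le> m"
  obtains \<sigma> a where "\<sigma> \<in> ring_hom K K" "\<And>c. c \<in> F \<Longrightarrow> \<sigma> c = c"
    "\<And>x. x \<in> carrier K \<Longrightarrow> (\<sigma> ^^ m) x = x" "a \<in> carrier K" "\<sigma> a \<noteq> a"
proof -
  obtain \<sigma> where \<sigma>: "\<sigma> \<in> Gal K F" "Gal K F = {restrict (\<sigma> ^^ i) (carrier K) | i. True}"
    and card: "card (Gal K F) = m"
    using assms(1) by (auto simp: cyclic_galois_ext_def)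
  have hom: "\<sigma> \<in> ring_hom K K" and "bij_betw \<sigma> (carrier K) (carrier K)" and fixed: "\<And>c. c \<in> F \<Longrightarrow> \<sigma> c = c"
    using \<sigma>(1) by (auto simp: Gal_def ring_iso_def)
  then have "inj_on \<sigma> (carrier K)" "\<sigma> ` carrier K \<subseteq> carrier K"
    by (auto simp: bij_betw_def)
  moreover have iter: "card {restrict (\<sigma> ^^ i) (carrier K) | i. True} = m" using \<sigma>(2) card by simp
  ultimately have "(\<sigma> ^^ m) x = x" if "x \<in> carrier K" for x
    by (rule iterates_period) (use assms(2) that in simp_all)
  moreover obtain a where "a \<in> carrier K" "\<sigma> a \<noteq> a"
    using iterates_nontrivial[OF iter assms(2)] by blast
  ultimately show ?thesis using that hom fixed by blast
qed

theorem corollary2p4: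
  fixes K :: "'a ring" and F :: "'a set" and m :: nat
  assumes "Factorial_Ring.prime m"
    and "field K" and "subfield F K"
    and "\<exists>w\<in>F. primitive_root_of_unity K m w"
    and "cyclic_galois_ext K F m"
  shows "\<exists>(A :: ('a, nat \<Rightarrow> 'a) module) \<iota>. nonassoc_cyclic_extension K F A \<iota> m"
proof -
  have m: "2 \<le> m" using assms(1) by (rule prime_ge_2_nat)
  obtain \<sigma> a where \<sigma>: "\<sigma> \<in> ring_hom K K" "\<And>c. c \<in> F \<Longrightarrow> \<sigma> c = c"
      "\<And>x. x \<in> carrier K \<Longrightarrow> (\<sigma> ^^ m) x = x" "a \<in> carrier K" "\<sigma> a \<noteq> a"
    using cyclic_galois_ext_generator[OF assms(5) m] by blast
  obtain \<omega> where \<omega>: "\<omega> \<in> F" "primitive_root_of_unity K m \<omega>" using assms(4) by blast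
  have "nonassoc_cyclic_algebra K F m \<sigma> a"
    by (intro nonassoc_cyclic_algebra.intro nonassoc_cyclic_algebra_axioms.intro assms(2,3) \<sigma>(1,2,4))
      (use m in simp)
  moreover have "ring.dimension K m F (carrier K)" using assms(5) by (simp add: cyclic_galois_ext_def)
  ultimately interpret nonassoc_cyclic_construction K F m \<sigma> a \<omega>
    by (intro nonassoc_cyclic_construction.intro nonassoc_cyclic_division.intro
        nonassoc_cyclic_division_axioms.intro nonassoc_cyclic_algebra_root.intro
        nonassoc_cyclic_algebra_root_axioms.intro
        assms(1) \<sigma>(3,5) \<omega>)
  show ?thesis using cyclic_alg_nonassoc_cyclic_extension by blast
qed

end
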